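(* Let $\Omega\subset\mathbb{R}^3$ be a domain on which integrations by parts produce no boundary terms (e.g. a periodic domain), let $\mu\ge 0$ be the viscosity, and let $e(\rho,s)$ be a smooth internal energy function of the mass density $\rho$ and the entropy density $s$. Consider the Lagrangian $$l(\boldsymbol{u},\rho,s,\boldsymbol{B})=\int_\Omega \frac{\rho|\boldsymbol{u}|^2}{2}-\rho\, e(\rho,s)-\frac{|\boldsymbol{B}|^2}{2}$$ and the action $S(\boldsymbol{u},\rho,s,\boldsymbol{B})=\int_0^{T_f} l(\boldsymbol{u}(t),\rho(t),s(t),\boldsymbol{B}(t))\,dt$. Call a curve $(\boldsymbol{u},\rho,s,\boldsymbol{B})$ extremal if $\delta S=0$ for all constrained variations of the following form: for every time-dependent vector field $\boldsymbol{v}$ with $\boldsymbol{v}(0)=\boldsymbol{v}(T_f)=0$, $$\delta\boldsymbol{u}=\partial_t\boldsymbol{v}+[\boldsymbol{u},\boldsymbol{v}],\qquad \delta\rho=-\nabla\cdot(\rho\boldsymbol{v}),\qquad \frac{\delta l}{\delta s}\big(\delta s+\nabla\cdot(s\boldsymbol{v})\big)=-\mu\,\nabla\boldsymbol{u}:\nabla\boldsymbol{v},\qquad \delta\boldsymbol{B}=-\nabla\times(\boldsymbol{B}\times\boldsymbol{v}),$$ where $[\boldsymbol{u},\boldsymbol{v}]=\boldsymbol{u}\cdot\nabla\boldsymbol{v}-\boldsymbol{v}\cdot\nabla\boldsymbol{u}$. Then, for curves whose density satisfies $\partial_t\rho+\nabla\cdot(\rho\boldsymbol{u})=0$, the curve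 is extremal if and only if it satisfies the viscous–resistive MHD momentum equation $$\rho\partial_t\boldsymbol{u}+\rho(\boldsymbol{u}\cdot\nabla\boldsymbol{u})+\nabla p+\boldsymbol{B}\times\nabla\times\boldsymbol{B}=\nabla\cdot(\mu\nabla\boldsymbol{u}),\qquad p=\rho\big(\rho\,\partial_\rho e+s\,\partial_s e\big).$$
   Context: $\frac{\delta l}{\delta s}$ denotes the $L^2$ functional derivative of $l$ with respect to $s$, namely $-\rho\,\partial_s e(\rho,s)$ (assumed nonvanishing, so that the constraint determines $\delta s$); $\nabla\boldsymbol{u}:\nabla\boldsymbol{v}$ is the Frobenius contraction. The paper supplements this principle with the equations $\partial_t\rho=-\nabla\cdot(\rho\boldsymbol{u})$, $\frac{\delta l}{\delta s}(\partial_t s+\nabla\cdot(s\boldsymbol{u}))=-\mu|\nabla\boldsymbol{u}|^2-\eta|\nabla\times\boldsymbol{B}|^2$, $\partial_t\boldsymbol{B}=-\nabla\times(\boldsymbol{B}\times\boldsymbol{u})-\nabla\times(\eta\nabla\times\boldsymbol{B})$ (with resistivity $\eta$ and temperature $T=-\frac{\delta l}{\delta s}$) to obtain the full viscous–resistive MHD system. *)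

theory Defs
  imports "HOL-Analysis.Analysis" "HOL-Analysis.Cross3"
begin

(* Space: R^3 with unit-periodic fields (the 3-torus, a domain without boundary terms).
   Time-dependent fields are functions of t :: real and x :: real^3. *)

type_synonym sfield = "real \<Rightarrow> real^3 \<Rightarrow> real"
type_synonym vfield = "real \<Rightarrow> real^3 \<Rightarrow> real^3"

coinductive smooth_fn :: "('a::euclidean_space \<Rightarrow> real) \<Rightarrow> bool" where
  "\<lbrakk>\<forall>x. f differentiable (at x);
    \<forall>b\<in>Basis. smooth_fn (\<lambda>x. frechet_derivative f (at x) b)\<rbrakk> \<Longrightarrow> smooth_fn f"

definition smooth_sf :: "sfield \<Rightarrow> bool" where
  "smooth_sf f \<longleftrightarrow> smooth_fn (\<lambda>p::real \<times> (real^3). f (fst p) (snd p))"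

definition smooth_vf :: "vfield \<Rightarrow> bool" where
  "smooth_vf w \<longleftrightarrow> (\<forall>i. smooth_fn (\<lambda>p::real \<times> (real^3). w (fst p) (snd p) $ i))"

definition periodic3 :: "(real^3 \<Rightarrow> 'b) \<Rightarrow> bool" where
  "periodic3 g \<longleftrightarrow> (\<forall>x j. g (x + axis j 1) = g x)"

definition pdx :: "3 \<Rightarrow> (real^3 \<Rightarrow> real) \<Rightarrow> real^3 \<Rightarrow> real" where
  "pdx j g x = deriv (\<lambda>h. g (x + h *\<^sub>R axis j 1)) 0"

definition sdt :: "sfield \<Rightarrow> sfield" where
  "sdt f t x = deriv (\<lambda>\<tau>. f \<tau> x) t"

definition vdt :: "vfield \<Rightarrow> vfield" where
  "vdt w t x = (\<chi> i. deriv (\<lambda>\<tau>. w \<tau> x $ i) t)"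

definition grad :: "(real^3 \<Rightarrow> real) \<Rightarrow> real^3 \<Rightarrow> real^3" where
  "grad g x = (\<chi> j. pdx j g x)"

definition dvg :: "(real^3 \<Rightarrow> real^3) \<Rightarrow> real^3 \<Rightarrow> real" where
  "dvg w x = (\<Sum>j\<in>UNIV. pdx j (\<lambda>y. w y $ j) x)"

definition curl :: "(real^3 \<Rightarrow> real^3) \<Rightarrow> real^3 \<Rightarrow> real^3" where
  "curl w x = (\<chi> i.
     if i = 1 then pdx 2 (\<lambda>y. w y $ 3) x - pdx 3 (\<lambda>y. w y $ 2) x
     else if i = 2 then pdx 3 (\<lambda>y. w y $ 1) x - pdx 1 (\<lambda>y. w y $ 3) x
     else pdx 1 (\<lambda>y. w y $ 2) x - pdx 2 (\<lambda>y. w y $ 1) x)"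

definition adv :: "(real^3 \<Rightarrow> real^3) \<Rightarrow> (real^3 \<Rightarrow> real^3) \<Rightarrow> real^3 \<Rightarrow> real^3" where
  "adv w z x = (\<chi> i. \<Sum>j\<in>UNIV. w x $ j * pdx j (\<lambda>y. z y $ i) x)"

definition lie :: "(real^3 \<Rightarrow> real^3) \<Rightarrow> (real^3 \<Rightarrow> real^3) \<Rightarrow> real^3 \<Rightarrow> real^3" where
  "lie u v x = adv u v x - adv v u x"

definition frob :: "(real^3 \<Rightarrow> real^3) \<Rightarrow> (real^3 \<Rightarrow> real^3) \<Rightarrow> real^3 \<Rightarrow> real" where
  "frob u v x = (\<Sum>i\<in>UNIV. \<Sum>j\<in>UNIV. pdx j (\<lambda>y. u y $ i) x * pdx j (\<lambda>y. v y $ i) x)"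

definition visc :: "real \<Rightarrow> (real^3 \<Rightarrow> real^3) \<Rightarrow> real^3 \<Rightarrow> real^3" where
  "visc \<mu> u x = (\<chi> i. \<Sum>j\<in>UNIV. pdx j (\<lambda>y. \<mu> * pdx j (\<lambda>z. u z $ i) y) x)"

definition d_rho :: "(real \<Rightarrow> real \<Rightarrow> real) \<Rightarrow> real \<Rightarrow> real \<Rightarrow> real" where
  "d_rho e r s = deriv (\<lambda>r'. e r' s) r"

definition d_s :: "(real \<Rightarrow> real \<Rightarrow> real) \<Rightarrow> real \<Rightarrow> real \<Rightarrow> real" where
  "d_s e r s = deriv (\<lambda>s'. e r s') s"

definition cell :: "(real^3) set" where
  "cell = cbox 0 (\<chi> i. 1)"

definition lag :: "(real \<Rightarrow> real \<Rightarrow> real) \<Rightarrow> (real^3 \<Rightarrow> real^3) \<Rightarrow> (real^3 \<Rightarrow> real)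
                   \<Rightarrow> (real^3 \<Rightarrow> real) \<Rightarrow> (real^3 \<Rightarrow> real^3) \<Rightarrow> real" where
  "lag e u \<rho> s B = integral cell
     (\<lambda>x. \<rho> x * (norm (u x))\<^sup>2 / 2 - \<rho> x * e (\<rho> x) (s x) - (norm (B x))\<^sup>2 / 2)"

definition action :: "(real \<Rightarrow> real \<Rightarrow> real) \<Rightarrow> real \<Rightarrow> vfield \<Rightarrow> sfield \<Rightarrow> sfield \<Rightarrow> vfield \<Rightarrow> real" where
  "action e Tf u \<rho> s B = integral {0..Tf} (\<lambda>t. lag e (u t) (\<rho> t) (s t) (B t))"

definition dl_ds :: "(real \<Rightarrow> real \<Rightarrow> real) \<Rightarrow> real \<Rightarrow> real \<Rightarrow> real" where
  "dl_ds e r s = - r * d_s e r s"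

(* extremality: delta S = 0 (first variation along the straight-line variation
   (u + eps du, rho + eps drho, s + eps ds, B + eps dB)) for all constrained variations *)
definition extremal :: "(real \<Rightarrow> real \<Rightarrow> real) \<Rightarrow> real \<Rightarrow> real \<Rightarrow> vfield \<Rightarrow> sfield \<Rightarrow> sfield \<Rightarrow> vfield \<Rightarrow> bool" where
  "extremal e \<mu> Tf u \<rho> s B \<longleftrightarrow>
    (\<forall>(v::vfield) (\<delta>s::sfield).
       smooth_vf v \<and> (\<forall>t. periodic3 (v t)) \<and> (\<forall>x. v 0 x = 0 \<and> v Tf x = 0) \<and>
       (\<forall>t\<in>{0..Tf}. \<forall>x. dl_ds e (\<rho> t x) (s t x) * (\<delta>s t x + dvg (\<lambda>y. s t y *\<^sub>R v t y) x)
                          = - \<mu> * frob (u t) (v t) x)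
       \<longrightarrow>
       (let \<delta>u = (\<lambda>t x. vdt v t x + lie (u t) (v t) x);
            \<delta>\<rho> = (\<lambda>t x. - dvg (\<lambda>y. \<rho> t y *\<^sub>R v t y) x);
            \<delta>B = (\<lambda>t x. - curl (\<lambda>y. cross3 (B t y) (v t y)) x)
        in ((\<lambda>\<epsilon>. action e Tf (\<lambda>t x. u t x + \<epsilon> *\<^sub>R \<delta>u t x) (\<lambda>t x. \<rho> t x + \<epsilon> * \<delta>\<rho> t x)
                                (\<lambda>t x. s t x + \<epsilon> * \<delta>s t x) (\<lambda>t x. B t x + \<epsilon> *\<^sub>R \<delta>B t x))
            has_real_derivative 0) (at 0)))"

definition pressure :: "(real \<Rightarrow> real \<Rightarrow> real) \<Rightarrow> sfield \<Rightarrow> sfield \<Rightarrow> sfield" where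
  "pressure e \<rho> s t x = \<rho> t x * (\<rho> t x * d_rho e (\<rho> t x) (s t x) + s t x * d_s e (\<rho> t x) (s t x))"

end

theory Submission
  imports Defs "HOL-Computational_Algebra.Polynomial"
begin

text \<open>Each constrained variation is driven by a single vector field \<open>v\<close>, and \<open>\<delta>S\<close> is linear in
  \<open>v\<close>. After eliminating \<open>\<delta>s\<close> with the entropy constraint, every term of the integrand is
  integrated by parts: in space, where periodicity kills the boundary terms, and in time, where
  \<open>v(0) = v(T\<^sub>f) = 0\<close> does. Using the continuity equation and the chain rule for \<open>e(\<rho>, s)\<close>, what
  remains is \<open>\<delta>S = -\<integral>\<integral> R \<cdot> v\<close>, where \<open>R\<close> is the residual of the momentum equation with pressure
  \<open>p = \<rho>(\<rho> \<partial>\<^sub>\<rho>e + s \<partial>\<^sub>se)\<close>. So the momentum equation implies extremality; conversely, testing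
  with \<open>v = \<phi> e\<^sub>i\<close> for smooth periodic bumps \<open>\<phi>\<close> concentrated near a point shows that the
  continuous residual vanishes.\<close>

section \<open>Smooth functions\<close>

definition dir_deriv :: "('a::euclidean_space \<Rightarrow> real) \<Rightarrow> 'a \<Rightarrow> 'a \<Rightarrow> real" where
  "dir_deriv f b x = frechet_derivative f (at x) b"

text \<open>\<open>ck_fn n f\<close> says that \<open>f\<close> is \<open>n + 1\<close> times differentiable. Its conjunction over all \<open>n\<close>
  is equivalent to the coinductive \<open>smooth_fn\<close>, so closure properties of \<open>smooth_fn\<close> follow by
  induction on \<open>n\<close>.\<close>

fun ck_fn :: "nat \<Rightarrow> ('a::euclidean_space \<Rightarrow> real) \<Rightarrow> bool" where
  "ck_fn 0 f \<longleftrightarrow> (\<forall>x. f differentiable (at x))"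
| "ck_fn (Suc n) f \<longleftrightarrow> (\<forall>x. f differentiable (at x)) \<and> (\<forall>b\<in>Basis. ck_fn n (dir_deriv f b))"

lemma ck_fn_imp_differentiable: "ck_fn n f \<Longrightarrow> f differentiable (at x)"
  by (cases n) auto

lemma ck_fn_Suc_imp: "ck_fn (Suc n) f \<Longrightarrow> ck_fn n f"
  by (induction n arbitrary: f) auto

lemma smooth_fn_iff_ck_fn: "smooth_fn f \<longleftrightarrow> (\<forall>n. ck_fn n f)"
proof
  show "\<forall>n. ck_fn n f" if "smooth_fn f"
  proof
    show "ck_fn n f" for n
      using that
    proof (induction n arbitrary: f)
      case 0 then show ?case by (auto elim: smooth_fn.cases)
    next
      case (Suc n) then show ?case by (auto elim!: smooth_fn.cases simp: dir_deriv_def[abs_def])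
    qed
  qed
next
  show "\<forall>n. ck_fn n f \<Longrightarrow> smooth_fn f"
  proof (coinduction arbitrary: f rule: smooth_fn.coinduct)
    case (smooth_fn f)
    have "\<forall>x. f differentiable at x" using smooth_fn[rule_format, of 0] by simp
    moreover have "\<forall>b\<in>Basis. \<forall>n. ck_fn n (dir_deriv f b)"
      using smooth_fn by (metis ck_fn.simps(2))
    ultimately show ?case by (auto simp: dir_deriv_def[abs_def])
  qed
qed

lemma smooth_fn_differentiable: "smooth_fn f \<Longrightarrow> f differentiable (at x)"
  by (auto elim: smooth_fn.cases)

lemma smooth_fn_dir_deriv: "smooth_fn f \<Longrightarrow> b \<in> Basis \<Longrightarrow> smooth_fn (dir_deriv f b)"
  by (auto elim!: smooth_fn.cases simp: dir_deriv_def[abs_def])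

lemma smooth_fn_isCont: "smooth_fn f \<Longrightarrow> isCont f x"
  by (simp add: differentiable_imp_continuous_within smooth_fn_differentiable)

lemma smooth_fn_continuous_on: "smooth_fn f \<Longrightarrow> continuous_on S f"
  by (simp add: continuous_at_imp_continuous_on smooth_fn_isCont)

lemma dir_deriv_eq: "(f has_derivative f') (at x) \<Longrightarrow> dir_deriv f b x = f' b"
  unfolding dir_deriv_def using frechet_derivative_at by metis

lemma dir_deriv_add:
  "f differentiable (at x) \<Longrightarrow> g differentiable (at x) \<Longrightarrow>
    dir_deriv (\<lambda>x. f x + g x) b x = dir_deriv f b x + dir_deriv g b x"
  by (rule dir_deriv_eq)
    (auto intro!: derivative_eq_intros simp: frechet_derivative_works[symmetric] dir_deriv_def)

lemma dir_deriv_diff: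
  "f differentiable (at x) \<Longrightarrow> g differentiable (at x) \<Longrightarrow>
    dir_deriv (\<lambda>x. f x - g x) b x = dir_deriv f b x - dir_deriv g b x"
  by (rule dir_deriv_eq)
    (auto intro!: derivative_eq_intros simp: frechet_derivative_works[symmetric] dir_deriv_def)

lemma dir_deriv_minus: "f differentiable (at x) \<Longrightarrow> dir_deriv (\<lambda>x. - f x) b x = - dir_deriv f b x"
  by (rule dir_deriv_eq)
    (auto intro!: derivative_eq_intros simp: frechet_derivative_works[symmetric] dir_deriv_def)

lemma dir_deriv_mult:
  "f differentiable (at x) \<Longrightarrow> g differentiable (at x) \<Longrightarrow>
    dir_deriv (\<lambda>x. f x * g x) b x = f x * dir_deriv g b x + dir_deriv f b x * g x"
  by (rule dir_deriv_eq)
    (auto intro!: derivative_eq_intros simp: frechet_derivative_works[symmetric] dir_deriv_def)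

lemma dir_deriv_linear:
  assumes "f differentiable (at x)"
  shows "dir_deriv f h x = (\<Sum>b\<in>Basis. (h \<bullet> b) * dir_deriv f b x)"
proof -
  have "linear (frechet_derivative f (at x))"
    using assms frechet_derivative_works has_derivative_linear by blast
  then have "frechet_derivative f (at x) (\<Sum>b\<in>Basis. (h \<bullet> b) *\<^sub>R b) = (\<Sum>b\<in>Basis. (h \<bullet> b) * dir_deriv f b x)"
    by (simp add: linear_sum linear_scale dir_deriv_def)
  then show ?thesis by (simp add: dir_deriv_def euclidean_representation)
qed

lemma dir_deriv_compose:
  fixes g :: "'b::euclidean_space \<Rightarrow> real" and F :: "'a::euclidean_space \<Rightarrow> 'b"
  assumes "F differentiable (at x)" and "g differentiable (at (F x))"
  shows "dir_deriv (\<lambda>x. g (F x)) b x = (\<Sum>c\<in>Basis. dir_deriv (\<lambda>x. F x \<bullet> c) b x * dir_deriv g c (F x))"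
proof -
  have dF: "(F has_derivative frechet_derivative F (at x)) (at x)"
    using assms(1) frechet_derivative_works by blast
  have dg: "(g has_derivative frechet_derivative g (at (F x))) (at (F x))"
    using assms(2) frechet_derivative_works by blast
  have dFc: "dir_deriv (\<lambda>x. F x \<bullet> c) b x = frechet_derivative F (at x) b \<bullet> c" for c
    by (rule dir_deriv_eq) (use dF in \<open>auto intro!: derivative_eq_intros\<close>)
  have "dir_deriv (\<lambda>x. g (F x)) b x = dir_deriv g (frechet_derivative F (at x) b) (F x)"
    using dir_deriv_eq[OF diff_chain_at[OF dF dg]] by (simp add: o_def dir_deriv_def)
  also have "\<dots> = (\<Sum>c\<in>Basis. (frechet_derivative F (at x) b \<bullet> c) * dir_deriv g c (F x))"
    using assms(2) dir_deriv_linear by blast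
  finally show ?thesis by (simp add: dFc)
qed

lemma ck_fn_const: "ck_fn n (\<lambda>x. c)"
proof (induction n arbitrary: c)
  case (Suc n)
  have "dir_deriv (\<lambda>x. c) b = (\<lambda>x. 0)" for b :: 'a
    by (rule ext, rule dir_deriv_eq) (rule has_derivative_const)
  then show ?case using Suc by simp
qed simp

lemma ck_fn_add: "ck_fn n f \<Longrightarrow> ck_fn n g \<Longrightarrow> ck_fn n (\<lambda>x. f x + g x)"
proof (induction n arbitrary: f g)
  case (Suc n)
  have "dir_deriv (\<lambda>x. f x + g x) b = (\<lambda>x. dir_deriv f b x + dir_deriv g b x)" for b
    using Suc.prems ck_fn_imp_differentiable by (simp add: fun_eq_iff dir_deriv_add)
  then show ?case using Suc by auto
qed auto

lemma ck_fn_mult: "ck_fn n f \<Longrightarrow> ck_fn n g \<Longrightarrow> ck_fn n (\<lambda>x. f x * g x)"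
proof (induction n arbitrary: f g)
  case (Suc n)
  have "dir_deriv (\<lambda>x. f x * g x) b = (\<lambda>x. f x * dir_deriv g b x + dir_deriv f b x * g x)" for b
    using Suc.prems ck_fn_imp_differentiable by (simp add: fun_eq_iff dir_deriv_mult)
  moreover have "ck_fn n f" "ck_fn n g" using Suc.prems ck_fn_Suc_imp by blast+
  ultimately show ?case using Suc by (auto intro!: ck_fn_add)
qed auto

lemma ck_fn_sum: "finite S \<Longrightarrow> (\<And>i. i \<in> S \<Longrightarrow> ck_fn n (f i)) \<Longrightarrow> ck_fn n (\<lambda>x. \<Sum>i\<in>S. f i x)"
  by (induction S rule: finite_induct) (auto intro: ck_fn_const ck_fn_add)

lemma ck_fn_compose:
  fixes g :: "'b::euclidean_space \<Rightarrow> real" and F :: "'a::euclidean_space \<Rightarrow> 'b"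
  assumes "ck_fn n g" and "\<And>c. c \<in> Basis \<Longrightarrow> ck_fn n (\<lambda>x. F x \<bullet> c)"
  shows "ck_fn n (\<lambda>x. g (F x))"
  using assms
proof (induction n arbitrary: g)
  case 0
  have "F differentiable (at x)" for x
    using 0(2) by (subst differentiable_componentwise_within) auto
  then show ?case using 0 differentiable_chain_at[of F _ g] by (simp add: o_def)
next
  case (Suc n)
  have Fd: "F differentiable (at x)" for x
    using Suc(3) by (subst differentiable_componentwise_within) (auto dest: ck_fn_imp_differentiable)
  have gd: "g differentiable (at y)" for y
    using Suc(2) by auto
  have Fc: "ck_fn n (\<lambda>x. F x \<bullet> c)" "\<forall>b\<in>Basis. ck_fn n (dir_deriv (\<lambda>x. F x \<bullet> c) b)" if "c \<in> Basis" for c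
    using Suc(3)[OF that] ck_fn_Suc_imp by auto
  have gc: "ck_fn n (\<lambda>x. dir_deriv g c (F x))" if "c \<in> Basis" for c
    using Suc.IH[of "dir_deriv g c"] Suc(2) that Fc by auto
  have "dir_deriv (\<lambda>x. g (F x)) b = (\<lambda>x. \<Sum>c\<in>Basis. dir_deriv (\<lambda>x. F x \<bullet> c) b x * dir_deriv g c (F x))" for b
    by (rule ext) (rule dir_deriv_compose[OF Fd gd])
  then have "ck_fn n (dir_deriv (\<lambda>x. g (F x)) b)" if "b \<in> Basis" for b
    using Fc gc that by (auto intro!: ck_fn_sum ck_fn_mult)
  moreover have "(\<lambda>x. g (F x)) differentiable (at x)" for x
    using Fd gd differentiable_chain_at[of F _ g] by (simp add: o_def)
  ultimately show ?case by auto
qed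

lemma smooth_fn_const: "smooth_fn (\<lambda>x. c)"
  by (simp add: smooth_fn_iff_ck_fn ck_fn_const)

lemma smooth_fn_add: "smooth_fn f \<Longrightarrow> smooth_fn g \<Longrightarrow> smooth_fn (\<lambda>x. f x + g x)"
  by (simp add: smooth_fn_iff_ck_fn ck_fn_add)

lemma smooth_fn_mult: "smooth_fn f \<Longrightarrow> smooth_fn g \<Longrightarrow> smooth_fn (\<lambda>x. f x * g x)"
  by (simp add: smooth_fn_iff_ck_fn ck_fn_mult)

lemma smooth_fn_compose:
  fixes g :: "'b::euclidean_space \<Rightarrow> real" and F :: "'a::euclidean_space \<Rightarrow> 'b"
  shows "smooth_fn g \<Longrightarrow> (\<And>c. c \<in> Basis \<Longrightarrow> smooth_fn (\<lambda>x. F x \<bullet> c)) \<Longrightarrow> smooth_fn (\<lambda>x. g (F x))"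
  by (simp add: smooth_fn_iff_ck_fn ck_fn_compose)

lemma smooth_fn_compose_real:
  "smooth_fn (g :: real \<Rightarrow> real) \<Longrightarrow> smooth_fn F \<Longrightarrow> smooth_fn (\<lambda>x. g (F x))"
  by (rule smooth_fn_compose) auto

lemma smooth_fn_minus: "smooth_fn f \<Longrightarrow> smooth_fn (\<lambda>x. - f x)"
  using smooth_fn_mult[OF smooth_fn_const[of "-1"]] by simp

lemma smooth_fn_diff: "smooth_fn f \<Longrightarrow> smooth_fn g \<Longrightarrow> smooth_fn (\<lambda>x. f x - g x)"
  using smooth_fn_add[OF _ smooth_fn_minus] by simp

lemma smooth_fn_divide_const: "smooth_fn f \<Longrightarrow> smooth_fn (\<lambda>x. f x / c)"
  using smooth_fn_mult[OF _ smooth_fn_const[of "1/c"]] by simp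

lemma smooth_fn_prod: "finite S \<Longrightarrow> (\<And>i. i \<in> S \<Longrightarrow> smooth_fn (f i)) \<Longrightarrow> smooth_fn (\<lambda>x. \<Prod>i\<in>S. f i x)"
  by (induction S rule: finite_induct) (auto intro: smooth_fn_const smooth_fn_mult)

lemma smooth_fn_linear: "bounded_linear l \<Longrightarrow> smooth_fn l"
proof -
  assume l: "bounded_linear l"
  have "dir_deriv l b = (\<lambda>x. l b)" for b
    by (rule ext, rule dir_deriv_eq) (use l in \<open>rule bounded_linear.has_derivative[OF _ has_derivative_ident]\<close>)
  then have "ck_fn (Suc n) l" for n
    using l by (auto simp: ck_fn_const bounded_linear_imp_differentiable)
  then show ?thesis using ck_fn_Suc_imp smooth_fn_iff_ck_fn by blast
qed

lemma dir_deriv_real: "(f has_real_derivative D) (at x) \<Longrightarrow> dir_deriv f 1 x = D"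
  by (drule dir_deriv_eq[of f "(*) D" x 1, unfolded has_field_derivative_def[symmetric]]) simp

lemma smooth_fn_sin: "smooth_fn sin"
proof -
  have "ck_fn n sin \<and> ck_fn n cos" for n
  proof (induction n)
    case 0 then show ?case by (auto simp: real_differentiable_def intro: DERIV_sin DERIV_cos)
  next
    case (Suc n)
    have "dir_deriv sin 1 = cos" by (rule ext, rule dir_deriv_real) (rule DERIV_sin)
    moreover have "dir_deriv cos 1 = (\<lambda>x. - sin x)" by (rule ext, rule dir_deriv_real) (rule DERIV_cos)
    moreover have "ck_fn n (\<lambda>x. - sin x)" using Suc ck_fn_mult[OF ck_fn_const[of n "-1"]] by auto
    ultimately show ?case using Suc by (auto simp: real_differentiable_def intro: DERIV_sin DERIV_cos)
  qed
  then show ?thesis by (simp add: smooth_fn_iff_ck_fn)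
qed

text \<open>The functions \<open>p(1/z) e\<^sup>-\<^sup>1\<^sup>/\<^sup>z\<close> (extended by \<open>0\<close> for \<open>z \<le> 0\<close>) form a class closed under
  differentiation: the derivative has the same shape with \<open>p\<close> replaced by \<open>z\<^sup>2 (p - p')\<close>, also at
  \<open>z = 0\<close> because \<open>e\<^sup>-\<^sup>w\<close> beats every polynomial in \<open>w\<close>.\<close>

definition poly_exp_inv :: "real poly \<Rightarrow> real \<Rightarrow> real" where
  "poly_exp_inv p z = (if z > 0 then poly p (1/z) * exp (- (1/z)) else 0)"

definition poly_exp_inv_step :: "real poly \<Rightarrow> real poly" where
  "poly_exp_inv_step p = [:0, 0, 1:] * (p - pderiv p)"

lemma tendsto_poly_times_exp_neg: "((\<lambda>w. poly p w * exp (- w)) \<longlongrightarrow> 0) at_top" for p :: "real poly"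
proof -
  have "((\<lambda>w. \<Sum>i\<le>degree p. coeff p i * (w ^ i / exp w)) \<longlongrightarrow> (\<Sum>i\<le>degree p. coeff p i * 0)) at_top"
    by (intro tendsto_sum tendsto_mult tendsto_const tendsto_power_div_exp_0)
  moreover have "poly p w * exp (- w) = (\<Sum>i\<le>degree p. coeff p i * (w ^ i / exp w))" for w
    by (simp add: poly_altdef sum_distrib_right exp_minus divide_inverse mult.assoc)
  ultimately show ?thesis by simp
qed

lemma has_real_derivative_poly_exp_inv_pos:
  assumes "z > 0"
  shows "(poly_exp_inv p has_real_derivative poly_exp_inv (poly_exp_inv_step p) z) (at z)"
proof -
  have i: "((\<lambda>z. 1/z) has_real_derivative (- 1 / z^2)) (at z)"
    using assms by (auto intro!: derivative_eq_intros simp: power2_eq_square)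
  have a: "((\<lambda>z. poly p (1/z)) has_real_derivative poly (pderiv p) (1/z) * (- 1 / z^2)) (at z)"
    by (rule DERIV_chain2[OF poly_DERIV i])
  have b: "((\<lambda>z. exp (- (1/z))) has_real_derivative exp (- (1/z)) * (1/z^2)) (at z)"
    using DERIV_chain2[OF DERIV_exp DERIV_minus[OF i]] by simp
  have d: "((\<lambda>z. poly p (1/z) * exp (- (1/z))) has_real_derivative
      poly p (1/z) * (exp (- (1/z)) * (1/z^2)) + poly (pderiv p) (1/z) * (- 1 / z^2) * exp (- (1/z))) (at z)"
    by (rule DERIV_cong[OF DERIV_mult[OF a b]]) (simp add: algebra_simps)
  have "poly p (1/z) * (exp (- (1/z)) * (1/z^2)) + poly (pderiv p) (1/z) * (- 1 / z^2) * exp (- (1/z))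
      = poly_exp_inv (poly_exp_inv_step p) z"
  proof -
    have q: "poly (poly_exp_inv_step p) w = w^2 * (poly p w - poly (pderiv p) w)" for w
      by (simp add: poly_exp_inv_step_def power2_eq_square algebra_simps)
    have z: "1/z^2 = (1/z)^2" "- 1 / z^2 = - ((1/z)^2)" by (simp_all add: power_divide)
    have r: "a*(E*w^2) + b*(-(w^2))*E = w^2*(a-b)*E" for a b E w :: real by algebra
    have "poly_exp_inv (poly_exp_inv_step p) z = (1/z)^2 * (poly p (1/z) - poly (pderiv p) (1/z)) * exp (- (1/z))"
      using assms unfolding poly_exp_inv_def q by (rule if_P)
    then show ?thesis unfolding z r by simp
  qed
  then have "((\<lambda>z. poly p (1/z) * exp (- (1/z))) has_real_derivative poly_exp_inv (poly_exp_inv_step p) z) (at z)"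
    by (rule DERIV_cong[OF d])
  then show ?thesis
    by (rule has_field_derivative_transform_within_open[of _ _ _ "{0<..}"])
      (use assms in \<open>auto simp: poly_exp_inv_def\<close>)
qed

lemma has_real_derivative_poly_exp_inv_0:
  "(poly_exp_inv p has_real_derivative 0) (at 0)"
proof -
  have "((\<lambda>z. poly (pCons 0 p) (inverse z) * exp (- inverse z)) \<longlongrightarrow> 0) (at_right 0)"
    using filterlim_compose[OF tendsto_poly_times_exp_neg filterlim_inverse_at_top_right] by (simp only: o_def)
  then have R: "((\<lambda>z. (poly_exp_inv p z - poly_exp_inv p 0) / (z - 0)) \<longlongrightarrow> 0) (at_right 0)"
    by (rule Lim_transform_eventually)
      (auto simp: poly_exp_inv_def field_simps intro: eventually_mono[OF eventually_at_right_less])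
  have L: "((\<lambda>z. (poly_exp_inv p z - poly_exp_inv p 0) / (z - 0)) \<longlongrightarrow> 0) (at_left 0)"
    by (rule Lim_transform_eventually[OF tendsto_const])
      (auto simp: poly_exp_inv_def eventually_at_filter)
  show ?thesis
    using L R by (simp add: has_field_derivative_iff filterlim_at_split)
qed

lemma has_real_derivative_poly_exp_inv:
  "(poly_exp_inv p has_real_derivative poly_exp_inv (poly_exp_inv_step p) z) (at z)"
proof -
  consider "z > 0" | "z < 0" | "z = 0" by linarith
  then show ?thesis
  proof cases
    case 1
    then show ?thesis by (rule has_real_derivative_poly_exp_inv_pos)
  next
    case 2
    have "((\<lambda>z. 0) has_real_derivative poly_exp_inv (poly_exp_inv_step p) z) (at z)"
      using 2 by (simp add: poly_exp_inv_def)
    then show ?thesis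
      by (rule has_field_derivative_transform_within_open[of _ _ _ "{..<0}"])
        (use 2 in \<open>auto simp: poly_exp_inv_def\<close>)
  next
    case 3
    then show ?thesis using has_real_derivative_poly_exp_inv_0 by (simp add: poly_exp_inv_def)
  qed
qed

lemma smooth_fn_poly_exp_inv: "smooth_fn (poly_exp_inv p)"
proof -
  have "ck_fn n (poly_exp_inv p)" for n
  proof (induction n arbitrary: p)
    case (Suc n)
    have "dir_deriv (poly_exp_inv p) 1 = poly_exp_inv (poly_exp_inv_step p)"
      by (rule ext, rule dir_deriv_real, rule has_real_derivative_poly_exp_inv)
    then show ?case using Suc has_real_derivative_poly_exp_inv by (auto simp: real_differentiable_def)
  qed (use has_real_derivative_poly_exp_inv in \<open>auto simp: real_differentiable_def\<close>)
  then show ?thesis by (simp add: smooth_fn_iff_ck_fn)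
qed

definition bump :: "real \<Rightarrow> real" where
  "bump y = poly_exp_inv 1 (1 - y * y)"

lemma smooth_fn_bump: "smooth_fn bump"
  unfolding bump_def
  by (intro smooth_fn_compose_real[OF smooth_fn_poly_exp_inv] smooth_fn_diff smooth_fn_mult smooth_fn_const
      smooth_fn_linear bounded_linear_ident)

lemma bump_nonneg: "bump y \<ge> 0"
  by (simp add: bump_def poly_exp_inv_def)

lemma bump_pos_iff: "bump y > 0 \<longleftrightarrow> \<bar>y\<bar> < 1"
proof -
  have "1 - y * y > 0 \<longleftrightarrow> \<bar>y\<bar> < 1"
    by (simp add: abs_square_less_1[symmetric] power2_eq_square)
  then show ?thesis by (simp add: bump_def poly_exp_inv_def)
qed

lemma bump_eq_0_iff: "bump y = 0 \<longleftrightarrow> 1 \<le> \<bar>y\<bar>"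
  using bump_nonneg[of y] bump_pos_iff[of y] by linarith

lemma bump_minus: "bump (- y) = bump y"
  by (simp add: bump_def)

section \<open>Space-time derivatives and spatial periodicity\<close>

type_synonym spacetime = "real \<times> (real^3)"

definition Dx :: "3 \<Rightarrow> (spacetime \<Rightarrow> real) \<Rightarrow> spacetime \<Rightarrow> real" where
  "Dx j F = dir_deriv F (0, axis j 1)"

definition Dt :: "(spacetime \<Rightarrow> real) \<Rightarrow> spacetime \<Rightarrow> real" where
  "Dt F = dir_deriv F (1, 0)"

lemma smooth_fn_Dx: "smooth_fn F \<Longrightarrow> smooth_fn (Dx j F)"
  unfolding Dx_def by (rule smooth_fn_dir_deriv) (auto simp: Basis_prod_def Basis_vec_def)

lemma smooth_fn_Dt: "smooth_fn F \<Longrightarrow> smooth_fn (Dt F)"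
  unfolding Dt_def by (rule smooth_fn_dir_deriv) (auto simp: Basis_prod_def)

lemma has_real_derivative_dir_deriv_line:
  assumes "F differentiable (at (p + h *\<^sub>R b))"
  shows "((\<lambda>h. F (p + h *\<^sub>R b)) has_real_derivative dir_deriv F b (p + h *\<^sub>R b)) (at h)"
proof -
  have "((\<lambda>h. p + h *\<^sub>R b) has_derivative (\<lambda>d. d *\<^sub>R b)) (at h)"
    by (auto intro!: derivative_eq_intros)
  from diff_chain_at[OF this assms[unfolded frechet_derivative_works]]
  have "((\<lambda>h. F (p + h *\<^sub>R b)) has_derivative (\<lambda>d. frechet_derivative F (at (p + h *\<^sub>R b)) (d *\<^sub>R b))) (at h)"
    by (simp add: o_def)
  moreover have "frechet_derivative F (at (p + h *\<^sub>R b)) (d *\<^sub>R b) = dir_deriv F b (p + h *\<^sub>R b) * d" for d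
    using assms by (simp add: dir_deriv_def linear_scale has_derivative_linear frechet_derivative_works)
  ultimately show ?thesis by (simp add: has_field_derivative_def mult_commute_abs)
qed

lemma has_real_derivative_Dt:
  "F differentiable (at (t, x)) \<Longrightarrow> ((\<lambda>\<tau>. F (\<tau>, x)) has_real_derivative Dt F (t, x)) (at t)"
  using has_real_derivative_dir_deriv_line[of F "(0, x)" t "(1, 0)"] by (simp add: Dt_def)

lemma has_real_derivative_Dx:
  "F differentiable (at (t, x + h *\<^sub>R axis j 1)) \<Longrightarrow>
    ((\<lambda>h. F (t, x + h *\<^sub>R axis j 1)) has_real_derivative Dx j F (t, x + h *\<^sub>R axis j 1)) (at h)"
  using has_real_derivative_dir_deriv_line[of F "(t, x)" h "(0, axis j 1)"] by (simp add: Dx_def)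

lemma pdx_eq_Dx: "smooth_fn F \<Longrightarrow> pdx j (\<lambda>y. F (t, y)) x = Dx j F (t, x)"
  unfolding pdx_def using has_real_derivative_Dx[of F t x 0 j] smooth_fn_differentiable[of F "(t, x)"]
  by (simp add: DERIV_imp_deriv)

lemma deriv_eq_Dt: "smooth_fn F \<Longrightarrow> deriv (\<lambda>\<tau>. F (\<tau>, x)) t = Dt F (t, x)"
  using has_real_derivative_Dt smooth_fn_differentiable DERIV_imp_deriv by blast

lemma Dx_const: "Dx j (\<lambda>p. c) p = 0"
  unfolding Dx_def by (rule dir_deriv_eq) (auto intro!: derivative_eq_intros)

lemma
  assumes "smooth_fn F" "smooth_fn G"
  shows Dx_add: "Dx j (\<lambda>p. F p + G p) p = Dx j F p + Dx j G p"
    and Dx_diff: "Dx j (\<lambda>p. F p - G p) p = Dx j F p - Dx j G p"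
    and Dx_mult: "Dx j (\<lambda>p. F p * G p) p = F p * Dx j G p + Dx j F p * G p"
    and Dt_add: "Dt (\<lambda>p. F p + G p) p = Dt F p + Dt G p"
    and Dt_mult: "Dt (\<lambda>p. F p * G p) p = F p * Dt G p + Dt F p * G p"
  using smooth_fn_differentiable[OF assms(1)] smooth_fn_differentiable[OF assms(2)]
  by (simp_all add: Dx_def Dt_def dir_deriv_add dir_deriv_diff dir_deriv_mult)

lemma Dx_minus: "smooth_fn F \<Longrightarrow> Dx j (\<lambda>p. - F p) p = - Dx j F p"
  by (simp add: Dx_def dir_deriv_minus smooth_fn_differentiable)

lemma Dx_divide_const: "smooth_fn F \<Longrightarrow> Dx j (\<lambda>p. F p / c) p = Dx j F p / c"
  using Dx_mult[of F "\<lambda>_. 1 / c" j p] smooth_fn_const[of "1 / c"] by (simp add: Dx_const)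

lemmas smooth_fn_intros = smooth_fn_add smooth_fn_mult smooth_fn_diff smooth_fn_minus smooth_fn_const
  smooth_fn_divide_const smooth_fn_Dx smooth_fn_Dt

lemmas D_simps = Dx_const Dx_add Dx_diff Dx_minus Dx_mult Dx_divide_const Dt_add Dt_mult

definition x_periodic :: "(spacetime \<Rightarrow> real) \<Rightarrow> bool" where
  "x_periodic F \<longleftrightarrow> (\<forall>q j. F (q + (0, axis j 1)) = F q)"

lemma x_periodic_const: "x_periodic (\<lambda>q. c)"
  and x_periodic_add: "x_periodic F \<Longrightarrow> x_periodic G \<Longrightarrow> x_periodic (\<lambda>q. F q + G q)"
  and x_periodic_diff: "x_periodic F \<Longrightarrow> x_periodic G \<Longrightarrow> x_periodic (\<lambda>q. F q - G q)"
  and x_periodic_mult: "x_periodic F \<Longrightarrow> x_periodic G \<Longrightarrow> x_periodic (\<lambda>q. F q * G q)"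
  and x_periodic_minus: "x_periodic F \<Longrightarrow> x_periodic (\<lambda>q. - F q)"
  and x_periodic_divide_const: "x_periodic F \<Longrightarrow> x_periodic (\<lambda>q. F q / c)"
  and x_periodic_sum: "(\<And>i. x_periodic (H i)) \<Longrightarrow> x_periodic (\<lambda>q. \<Sum>i\<in>A. H i q)"
  by (simp_all add: x_periodic_def)

lemma dir_deriv_translate:
  assumes "F differentiable (at (p + c))" and "\<And>q. F (q + c) = F q"
  shows "dir_deriv F b (p + c) = dir_deriv F b p"
proof -
  have "((\<lambda>q. q + c) has_derivative (\<lambda>h. h)) (at p)"
    by (auto intro!: derivative_eq_intros)
  from diff_chain_at[OF this assms(1)[unfolded frechet_derivative_works]]
  have "(F has_derivative frechet_derivative F (at (p + c))) (at p)"
    using assms(2) by (simp add: o_def)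
  then show ?thesis by (simp add: dir_deriv_def frechet_derivative_at[symmetric])
qed

lemma x_periodic_Dx: "smooth_fn F \<Longrightarrow> x_periodic F \<Longrightarrow> x_periodic (Dx j F)"
  unfolding x_periodic_def Dx_def using dir_deriv_translate smooth_fn_differentiable by metis

lemma x_periodic_Dt: "smooth_fn F \<Longrightarrow> x_periodic F \<Longrightarrow> x_periodic (Dt F)"
  unfolding x_periodic_def Dt_def using dir_deriv_translate smooth_fn_differentiable by metis

lemmas x_periodic_intros = x_periodic_const x_periodic_add x_periodic_diff x_periodic_mult
  x_periodic_minus x_periodic_divide_const x_periodic_sum x_periodic_Dx x_periodic_Dt

lemma x_periodicD: "x_periodic F \<Longrightarrow> F (t, x + axis j 1) = F (t, x)"
  unfolding x_periodic_def by (metis add_Pair add.right_neutral)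

lemma x_periodic_int_shift:
  assumes "x_periodic F"
  shows "F (t, x + of_int k *\<^sub>R axis j 1) = F (t, x)"
proof (induction k arbitrary: x rule: int_induct[where k = 0])
  case (step1 k)
  have "x + of_int (k + 1) *\<^sub>R axis j 1 = (x + axis j 1) + of_int k *\<^sub>R axis j 1"
    by (simp add: algebra_simps)
  then show ?case using step1.IH[of "x + axis j 1"] x_periodicD[OF assms] by (simp add: add.assoc)
next
  case (step2 k)
  have "x + of_int (k - 1) *\<^sub>R axis j 1 = (x - axis j 1) + of_int k *\<^sub>R axis j 1"
    by (simp add: algebra_simps)
  moreover have "F (t, x - axis j 1) = F (t, x)"
    using x_periodicD[OF assms, of t "x - axis j 1" j] by simp
  ultimately show ?case using step2.IH[of "x - axis j 1"] by (simp only:)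
qed simp

lemma x_periodic_int_vec_shift:
  assumes "x_periodic F"
  shows "F (t, x + (\<chi> j. of_int (k j))) = F (t, x)"
proof -
  have "x + (\<chi> j. of_int (k j))
      = ((x + of_int (k 1) *\<^sub>R axis 1 1) + of_int (k 2) *\<^sub>R axis 2 1) + of_int (k 3) *\<^sub>R axis 3 1"
    by (simp add: vec_eq_iff axis_def) (metis exhaust_3)
  then show ?thesis by (simp only: x_periodic_int_shift[OF assms])
qed

section \<open>Integrals over a period cell\<close>

abbreviation one3 :: "real^3" where "one3 \<equiv> (\<chi> i. 1)"

lemma axis_in_Basis: "axis j (1::real) \<in> (Basis :: (real^3) set)"
  by (auto simp: Basis_vec_def)

lemma cell_inter_halfspace_le:
  assumes "0 \<le> c" "c \<le> 1"
  shows "cell \<inter> {x. x \<bullet> axis j 1 \<le> c} = cbox 0 (\<chi> i. if i = j then c else 1)"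
  using assms by (auto simp: cell_def mem_box_cart inner_axis split: if_splits) (metis order.trans)+

lemma cell_inter_halfspace_ge:
  assumes "0 \<le> c" "c \<le> 1"
  shows "cell \<inter> {x. x \<bullet> axis j 1 \<ge> c} = cbox (\<chi> i. if i = j then c else 0) one3"
  using assms by (auto simp: cell_def mem_box_cart inner_axis split: if_splits) (metis order.trans)+

text \<open>Translation by \<open>h e\<^sub>j\<close> maps the two halves of the cell cut at \<open>x\<^sub>j = 1 - h\<close> onto the two
  halves cut at \<open>x\<^sub>j = h\<close>, the second one up to a period.\<close>

lemma integral_cell_translate:
  fixes f :: "real^3 \<Rightarrow> real"
  assumes cont: "continuous_on UNIV f" and per: "\<And>x. f (x + axis j 1) = f x" and h: "0 \<le> h" "h \<le> 1"
  shows "integral cell (\<lambda>x. f (x + h *\<^sub>R axis j 1)) = integral cell f"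
proof -
  define e :: "real^3" where "e = axis j 1"
  define a1 :: "real^3" where "a1 = (\<chi> i. if i = j then h else 0)"
  define b2 :: "real^3" where "b2 = (\<chi> i. if i = j then h else 1)"
  have int: "f integrable_on cbox a b" for a b
    by (rule integrable_continuous[OF continuous_on_subset[OF cont]]) auto
  have IA: "(f has_integral integral (cbox a1 one3) f) (cbox a1 one3)" using int by blast
  have IB: "(f has_integral integral (cbox 0 b2) f) (cbox 0 b2)" using int by blast
  have A: "((\<lambda>x. f (x + h *\<^sub>R e)) has_integral integral (cbox a1 one3) f)
      (cbox 0 (\<chi> i. if i = j then 1 - h else 1))"
  proof -
    have "((\<lambda>x. f (1 *\<^sub>R x + h *\<^sub>R e)) has_integral (integral (cbox a1 one3) f /\<^sub>R 1 ^ DIM(real^3)))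
           (cbox ((a1 - h *\<^sub>R e) /\<^sub>R 1) ((one3 - h *\<^sub>R e) /\<^sub>R 1))"
      by (rule has_integral_affinity'[OF IA]) simp
    moreover have "a1 - h *\<^sub>R e = 0" "one3 - h *\<^sub>R e = (\<chi> i. if i = j then 1 - h else 1)"
      by (auto simp: vec_eq_iff a1_def e_def axis_def)
    ultimately show ?thesis by simp
  qed
  have B: "((\<lambda>x. f (x + h *\<^sub>R e)) has_integral integral (cbox 0 b2) f)
      (cbox (\<chi> i. if i = j then 1 - h else 0) one3)"
  proof -
    have "((\<lambda>x. f (1 *\<^sub>R x + (h - 1) *\<^sub>R e)) has_integral (integral (cbox 0 b2) f /\<^sub>R 1 ^ DIM(real^3)))
           (cbox ((0 - (h - 1) *\<^sub>R e) /\<^sub>R 1) ((b2 - (h - 1) *\<^sub>R e) /\<^sub>R 1))"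
      by (rule has_integral_affinity'[OF IB]) simp
    moreover have "0 - (h - 1) *\<^sub>R e = (\<chi> i. if i = j then 1 - h else 0)" "b2 - (h - 1) *\<^sub>R e = one3"
      by (auto simp: vec_eq_iff b2_def e_def axis_def)
    moreover have "f (x + (h - 1) *\<^sub>R e) = f (x + h *\<^sub>R e)" for x
    proof -
      have eq: "x + h *\<^sub>R e = (x + (h - 1) *\<^sub>R e) + axis j 1" by (simp add: e_def algebra_simps)
      have "f (x + h *\<^sub>R e) = f (x + (h - 1) *\<^sub>R e)" unfolding eq by (rule per)
      then show ?thesis by simp
    qed
    ultimately show ?thesis by simp
  qed
  have "((\<lambda>x. f (x + h *\<^sub>R e)) has_integral (integral (cbox a1 one3) f + integral (cbox 0 b2) f)) cell"
    using has_integral_split[OF _ _ axis_in_Basis[of j], where f="\<lambda>x. f (x + h *\<^sub>R e)" and a=0 and b=one3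
        and c="1 - h"] A B h
      cell_inter_halfspace_le[where c="1 - h" and j=j] cell_inter_halfspace_ge[where c="1 - h" and j=j]
    by (simp add: cell_def)
  moreover have "(f has_integral (integral (cbox 0 b2) f + integral (cbox a1 one3) f)) cell"
    using has_integral_split[OF _ _ axis_in_Basis[of j], where f=f and a=0 and b=one3 and c=h] IA IB h
      cell_inter_halfspace_le[where c=h and j=j] cell_inter_halfspace_ge[where c=h and j=j]
    by (simp add: cell_def a1_def b2_def)
  ultimately show ?thesis unfolding e_def by (metis add.commute integral_unique)
qed

lemma continuous_on_slice: "smooth_fn F \<Longrightarrow> continuous_on S (\<lambda>x. F (t, x))"
  by (intro continuous_on_compose2[OF smooth_fn_continuous_on[of F UNIV]]) (auto intro!: continuous_intros)

text \<open>\<open>h \<mapsto> \<integral>\<^sub>c\<^sub>e\<^sub>l\<^sub>l F(t, x + h e\<^sub>j) dx\<close> is constant by translation invariance, and by differentiation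
  under the integral its derivative at \<open>0\<close> is \<open>\<integral>\<^sub>c\<^sub>e\<^sub>l\<^sub>l \<partial>\<^sub>jF(t, x) dx\<close>.\<close>

lemma integral_cell_Dx:
  fixes F :: "spacetime \<Rightarrow> real"
  assumes sm: "smooth_fn F" and per: "\<And>t x. F (t, x + axis j 1) = F (t, x)"
  shows "integral cell (\<lambda>x. Dx j F (t, x)) = 0"
proof -
  define G where "G h = integral cell (\<lambda>x. F (t, x + h *\<^sub>R axis j 1))" for h
  have G0: "G h = G 0" if "h \<in> {-1<..<1}" for h
  proof (cases "h \<ge> 0")
    case True
    then show ?thesis
      using that integral_cell_translate[of "\<lambda>x. F (t, x)" j h] per continuous_on_slice[OF sm]
      by (simp add: G_def)
  next
    case False
    have "F (t, x + (h + 1) *\<^sub>R axis j 1) = F (t, x + h *\<^sub>R axis j 1)" for x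
      using per[of t "x + h *\<^sub>R axis j 1"] by (simp add: scaleR_add_left add.assoc)
    then have "G h = integral cell (\<lambda>x. F (t, x + (h + 1) *\<^sub>R axis j 1))"
      unfolding G_def by simp
    also have "\<dots> = G 0"
      using False that integral_cell_translate[of "\<lambda>x. F (t, x)" j "h + 1"] per continuous_on_slice[OF sm]
      by (simp add: G_def)
    finally show ?thesis .
  qed
  have cD: "continuous_on UNIV (Dx j F)" using smooth_fn_continuous_on smooth_fn_Dx sm by blast
  have "(G has_field_derivative integral (cbox 0 one3) (\<lambda>x. Dx j F (t, x + 0 *\<^sub>R axis j 1))) (at 0 within UNIV)"
    unfolding G_def cell_def
  proof (rule leibniz_rule_field_derivative)
    fix h :: real and x :: "real^3"
    show "((\<lambda>h. F (t, x + h *\<^sub>R axis j 1)) has_field_derivative Dx j F (t, x + h *\<^sub>R axis j 1))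
        (at h within UNIV)"
      using has_real_derivative_Dx[of F t x h j] smooth_fn_differentiable[OF sm] by simp
  next
    fix h :: real
    show "(\<lambda>x. F (t, x + h *\<^sub>R axis j 1)) integrable_on cbox 0 one3"
      by (rule integrable_continuous, rule continuous_on_compose2[OF smooth_fn_continuous_on[OF sm, of UNIV]])
        (auto intro!: continuous_intros)
  next
    have "continuous_on (UNIV \<times> cbox 0 one3) (\<lambda>p. Dx j F (t, snd p + fst p *\<^sub>R axis j 1))"
      by (rule continuous_on_compose2[OF cD]) (auto intro!: continuous_intros)
    then show "continuous_on (UNIV \<times> cbox 0 one3) (\<lambda>(h, x). Dx j F (t, x + h *\<^sub>R axis j 1))"
      by (simp add: split_beta)
  qed auto
  moreover have "(G has_field_derivative 0) (at 0)"
  proof (rule has_field_derivative_transform_within_open[of "\<lambda>h. G 0" 0 0 "{-1<..<1}"])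
    show "((\<lambda>h. G 0) has_field_derivative 0) (at 0)" by simp
  next
    fix x :: real assume "x \<in> {-1<..<1}" then show "G 0 = G x" using G0 by metis
  qed auto
  ultimately show ?thesis unfolding cell_def by (simp add: DERIV_unique)
qed

definition slab :: "real \<Rightarrow> spacetime set" where
  "slab Tf = cbox (0, 0) (Tf, one3)"

lemma smooth_fn_integrable_on_slab: "smooth_fn f \<Longrightarrow> f integrable_on slab Tf"
  unfolding slab_def by (rule integrable_continuous[OF smooth_fn_continuous_on])

lemma integral_slab_Dx:
  fixes F :: "spacetime \<Rightarrow> real"
  assumes sm: "smooth_fn F" and per: "\<And>t x. F (t, x + axis j 1) = F (t, x)"
  shows "integral (slab Tf) (Dx j F) = 0"
proof -
  have "integral (slab Tf) (Dx j F) = integral (cbox 0 Tf) (\<lambda>t. integral (cbox 0 one3) (\<lambda>x. Dx j F (t, x)))"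
    unfolding slab_def by (rule integral_prod_continuous) (use smooth_fn_continuous_on smooth_fn_Dx sm in blast)
  also have "\<dots> = 0" using integral_cell_Dx[OF sm per] by (simp add: cell_def)
  finally show ?thesis .
qed

lemma integral_slab_Dt:
  fixes F :: "spacetime \<Rightarrow> real"
  assumes sm: "smooth_fn F" and z: "\<And>x. F (0, x) = 0" "\<And>x. F (Tf, x) = 0" and Tf: "0 \<le> Tf"
  shows "integral (slab Tf) (Dt F) = 0"
proof -
  have cD: "continuous_on UNIV (Dt F)" using smooth_fn_continuous_on smooth_fn_Dt sm by blast
  have "integral (slab Tf) (Dt F) = integral (cbox 0 Tf) (\<lambda>t. integral (cbox 0 one3) (\<lambda>x. Dt F (t, x)))"
    unfolding slab_def by (rule integral_prod_continuous) (use cD continuous_on_subset in blast)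
  also have "\<dots> = integral (cbox 0 one3) (\<lambda>x. integral (cbox 0 Tf) (\<lambda>t. Dt F (t, x)))"
    by (rule integral_swap_continuous) (use cD in \<open>auto intro: continuous_on_subset simp: split_beta\<close>)
  also have "\<dots> = integral (cbox 0 one3) (\<lambda>x. 0)"
  proof (rule integral_cong)
    fix x :: "real^3"
    have "((\<lambda>t. Dt F (t, x)) has_integral (F (Tf, x) - F (0, x))) {0..Tf}"
    proof (rule fundamental_theorem_of_calculus[OF Tf])
      fix t assume "t \<in> {0..Tf}"
      show "((\<lambda>t. F (t, x)) has_vector_derivative Dt F (t, x)) (at t within {0..Tf})"
        using has_real_derivative_Dt[of F t x] smooth_fn_differentiable[OF sm]
        by (simp add: has_real_derivative_iff_has_vector_derivative[symmetric] has_field_derivative_at_within)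
    qed
    then show "integral (cbox 0 Tf) (\<lambda>t. Dt F (t, x)) = 0" using z by (simp add: integral_unique)
  qed
  finally show ?thesis by simp
qed

section \<open>First variation of the action\<close>

lemma has_real_derivative_case_prod_line:
  fixes e :: "real \<Rightarrow> real \<Rightarrow> real"
  assumes "case_prod e differentiable (at (r + \<epsilon> * dr, s + \<epsilon> * ds))"
  shows "((\<lambda>\<epsilon>. e (r + \<epsilon> * dr) (s + \<epsilon> * ds)) has_real_derivative
     dir_deriv (case_prod e) (1, 0) (r + \<epsilon> * dr, s + \<epsilon> * ds) * dr
       + dir_deriv (case_prod e) (0, 1) (r + \<epsilon> * dr, s + \<epsilon> * ds) * ds) (at \<epsilon>)"
proof -
  have B: "(Basis :: (real \<times> real) set) = {(1, 0), (0, 1)}"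
    by (auto simp: Basis_prod_def)
  have "(r, s) + \<epsilon> *\<^sub>R (dr, ds) = (r + \<epsilon> * dr, s + \<epsilon> * ds)"
    by simp
  then have "((\<lambda>\<epsilon>. e (r + \<epsilon> * dr) (s + \<epsilon> * ds)) has_real_derivative
      dir_deriv (case_prod e) (dr, ds) (r + \<epsilon> * dr, s + \<epsilon> * ds)) (at \<epsilon>)"
    using has_real_derivative_dir_deriv_line[of "case_prod e" "(r, s)" \<epsilon> "(dr, ds)"] assms by simp
  moreover have "dir_deriv (case_prod e) (dr, ds) (r + \<epsilon> * dr, s + \<epsilon> * ds)
      = dir_deriv (case_prod e) (1, 0) (r + \<epsilon> * dr, s + \<epsilon> * ds) * dr
        + dir_deriv (case_prod e) (0, 1) (r + \<epsilon> * dr, s + \<epsilon> * ds) * ds"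
    using dir_deriv_linear[OF assms, of "(dr, ds)"] by (simp add: B mult.commute)
  ultimately show ?thesis by simp
qed

lemma d_rho_eq_dir_deriv:
  "case_prod e differentiable (at (r, s)) \<Longrightarrow> d_rho e r s = dir_deriv (case_prod e) (1, 0) (r, s)"
  using has_real_derivative_case_prod_line[of e 0 r 1 s 0] by (simp add: d_rho_def DERIV_imp_deriv)

lemma d_s_eq_dir_deriv:
  "case_prod e differentiable (at (r, s)) \<Longrightarrow> d_s e r s = dir_deriv (case_prod e) (0, 1) (r, s)"
  using has_real_derivative_case_prod_line[of e r s 0 0 1] by (simp add: d_s_def DERIV_imp_deriv)

definition lag_density :: "(real \<Rightarrow> real \<Rightarrow> real) \<Rightarrow> real^3 \<Rightarrow> real \<Rightarrow> real \<Rightarrow> real^3 \<Rightarrow> real" where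
  "lag_density e u r s b = r * (norm u)\<^sup>2 / 2 - r * e r s - (norm b)\<^sup>2 / 2"

definition lag_density_deriv ::
    "(real \<Rightarrow> real \<Rightarrow> real) \<Rightarrow> real^3 \<Rightarrow> real^3 \<Rightarrow> real \<Rightarrow> real \<Rightarrow> real \<Rightarrow> real \<Rightarrow> real^3 \<Rightarrow> real^3 \<Rightarrow> real \<Rightarrow> real" where
  "lag_density_deriv e u du r dr s ds b db \<epsilon> =
     dr * ((norm u)\<^sup>2 + 2 * \<epsilon> * (u \<bullet> du) + \<epsilon>\<^sup>2 * (norm du)\<^sup>2) / 2
     + (r + \<epsilon> * dr) * (2 * (u \<bullet> du) + 2 * \<epsilon> * (norm du)\<^sup>2) / 2
     - (dr * e (r + \<epsilon> * dr) (s + \<epsilon> * ds)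
        + (r + \<epsilon> * dr) * (dir_deriv (case_prod e) (1, 0) (r + \<epsilon> * dr, s + \<epsilon> * ds) * dr
                         + dir_deriv (case_prod e) (0, 1) (r + \<epsilon> * dr, s + \<epsilon> * ds) * ds))
     - (2 * (b \<bullet> db) + 2 * \<epsilon> * (norm db)\<^sup>2) / 2"

lemma norm_add_scaleR_squared:
  fixes a b :: "'a::real_inner"
  shows "(norm (a + \<epsilon> *\<^sub>R b))\<^sup>2 = (norm a)\<^sup>2 + 2 * \<epsilon> * (a \<bullet> b) + \<epsilon>\<^sup>2 * (norm b)\<^sup>2"
  unfolding power2_norm_eq_inner
  by (simp add: inner_add_left inner_add_right inner_commute power2_eq_square algebra_simps)

lemma has_real_derivative_lag_density:
  assumes "\<And>q. case_prod e differentiable (at q)"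
  shows "((\<lambda>\<epsilon>. lag_density e (u + \<epsilon> *\<^sub>R du) (r + \<epsilon> * dr) (s + \<epsilon> * ds) (b + \<epsilon> *\<^sub>R db))
           has_real_derivative lag_density_deriv e u du r dr s ds b db \<epsilon>) (at \<epsilon>)"
proof -
  have eq: "(\<lambda>\<epsilon>. lag_density e (u + \<epsilon> *\<^sub>R du) (r + \<epsilon> * dr) (s + \<epsilon> * ds) (b + \<epsilon> *\<^sub>R db)) =
    (\<lambda>\<epsilon>. (r + \<epsilon> * dr) * ((norm u)\<^sup>2 + 2 * \<epsilon> * (u \<bullet> du) + \<epsilon>\<^sup>2 * (norm du)\<^sup>2) / 2
         - (r + \<epsilon> * dr) * e (r + \<epsilon> * dr) (s + \<epsilon> * ds)
         - ((norm b)\<^sup>2 + 2 * \<epsilon> * (b \<bullet> db) + \<epsilon>\<^sup>2 * (norm db)\<^sup>2) / 2)"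
    by (simp add: lag_density_def norm_add_scaleR_squared)
  note e_deriv = has_real_derivative_case_prod_line[OF assms]
  show ?thesis unfolding eq lag_density_deriv_def
    by (rule derivative_eq_intros e_deriv refl | simp)+ (simp add: power2_eq_square field_simps)
qed

lemma continuous_on_dir_deriv_case_prod:
  assumes "smooth_fn (case_prod e)" "b \<in> Basis" "continuous_on S f" "continuous_on S g"
  shows "continuous_on S (\<lambda>x. dir_deriv (case_prod e) b (f x, g x))"
  by (rule continuous_on_compose2[OF smooth_fn_continuous_on[OF smooth_fn_dir_deriv[OF assms(1,2)]]])
    (auto intro!: continuous_intros assms(3,4))

lemma continuous_on_compose_case_prod:
  assumes "smooth_fn (case_prod e)" "continuous_on S f" "continuous_on S g"
  shows "continuous_on S (\<lambda>x. e (f x) (g x))"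
  using continuous_on_compose2[OF smooth_fn_continuous_on[OF assms(1)], of S "\<lambda>x. (f x, g x)"]
  by (auto intro!: continuous_intros assms(2,3))

lemma action_eq_integral_slab:
  fixes u b :: "spacetime \<Rightarrow> real^3" and r s :: "spacetime \<Rightarrow> real"
  assumes "continuous_on (slab Tf) (\<lambda>p. lag_density e (u p) (r p) (s p) (b p))"
  shows "action e Tf (\<lambda>t x. u (t, x)) (\<lambda>t x. r (t, x)) (\<lambda>t x. s (t, x)) (\<lambda>t x. b (t, x))
    = integral (slab Tf) (\<lambda>p. lag_density e (u p) (r p) (s p) (b p))"
  using integral_prod_continuous[OF assms[unfolded slab_def]]
  by (simp add: action_def lag_def cell_def slab_def lag_density_def cbox_interval)

lemma has_real_derivative_action:
  fixes u du b db :: "spacetime \<Rightarrow> real^3" and r dr s ds :: "spacetime \<Rightarrow> real"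
  assumes e: "smooth_fn (case_prod e)"
    and cont: "continuous_on (slab Tf) u" "continuous_on (slab Tf) du" "continuous_on (slab Tf) b"
      "continuous_on (slab Tf) db" "continuous_on (slab Tf) r" "continuous_on (slab Tf) dr"
      "continuous_on (slab Tf) s" "continuous_on (slab Tf) ds"
  shows "((\<lambda>\<epsilon>. action e Tf (\<lambda>t x. u (t, x) + \<epsilon> *\<^sub>R du (t, x)) (\<lambda>t x. r (t, x) + \<epsilon> * dr (t, x))
                 (\<lambda>t x. s (t, x) + \<epsilon> * ds (t, x)) (\<lambda>t x. b (t, x) + \<epsilon> *\<^sub>R db (t, x)))
         has_real_derivative
         integral (slab Tf) (\<lambda>p. lag_density_deriv e (u p) (du p) (r p) (dr p) (s p) (ds p) (b p) (db p) 0)) (at 0)"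
proof -
  define L where "L \<epsilon> p = lag_density e (u p + \<epsilon> *\<^sub>R du p) (r p + \<epsilon> * dr p) (s p + \<epsilon> * ds p) (b p + \<epsilon> *\<^sub>R db p)"
    for \<epsilon> p
  have contL: "continuous_on (slab Tf) (L \<epsilon>)" for \<epsilon>
    unfolding L_def lag_density_def by (intro continuous_intros continuous_on_compose_case_prod[OF e] cont) auto
  have lift: "continuous_on (UNIV \<times> slab Tf) (\<lambda>z. f (snd z))" if "continuous_on (slab Tf) f"
    for f :: "spacetime \<Rightarrow> 'z::topological_space"
    by (rule continuous_on_compose2[OF that]) (auto intro!: continuous_intros)
  have "continuous_on (UNIV \<times> slab Tf) (\<lambda>z. lag_density_deriv e (u (snd z)) (du (snd z)) (r (snd z)) (dr (snd z))
      (s (snd z)) (ds (snd z)) (b (snd z)) (db (snd z)) (fst z))"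
    unfolding lag_density_deriv_def
    by (intro continuous_intros continuous_on_compose_case_prod[OF e] continuous_on_dir_deriv_case_prod[OF e]
        lift cont)
      (auto simp: Basis_prod_def)
  then have "((\<lambda>\<epsilon>. integral (slab Tf) (L \<epsilon>)) has_field_derivative
      integral (slab Tf) (\<lambda>p. lag_density_deriv e (u p) (du p) (r p) (dr p) (s p) (ds p) (b p) (db p) 0))
      (at 0 within UNIV)"
    unfolding L_def slab_def
    by (intro leibniz_rule_field_derivative integrable_continuous contL[unfolded L_def slab_def])
      (auto simp: split_beta slab_def has_real_derivative_lag_density smooth_fn_differentiable[OF e])
  moreover have "action e Tf (\<lambda>t x. u (t, x) + \<epsilon> *\<^sub>R du (t, x)) (\<lambda>t x. r (t, x) + \<epsilon> * dr (t, x))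
      (\<lambda>t x. s (t, x) + \<epsilon> * ds (t, x)) (\<lambda>t x. b (t, x) + \<epsilon> *\<^sub>R db (t, x)) = integral (slab Tf) (L \<epsilon>)" for \<epsilon>
    using action_eq_integral_slab[OF contL[unfolded L_def]] by (simp add: L_def[abs_def])
  ultimately show ?thesis by simp
qed

section \<open>Integration by parts\<close>

text \<open>Componentwise form of the fields: \<open>R\<close>, \<open>S\<close> stand for \<open>\<rho>\<close>, \<open>s\<close>; \<open>E\<close>, \<open>E_r\<close>, \<open>E_s\<close> for
  \<open>e\<close>, \<open>\<partial>\<^sub>\<rho>e\<close>, \<open>\<partial>\<^sub>se\<close> evaluated at \<open>(\<rho>, s)\<close>; \<open>U i\<close> and \<open>Bm i\<close> for the components of \<open>u\<close> and \<open>B\<close>.\<close>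

locale mhd_components =
  fixes R S E E_r E_s :: "spacetime \<Rightarrow> real" and U Bm :: "3 \<Rightarrow> spacetime \<Rightarrow> real" and \<mu> :: real
  assumes smooth: "smooth_fn R" "smooth_fn S" "\<And>i. smooth_fn (U i)" "\<And>i. smooth_fn (Bm i)"
      "smooth_fn E" "smooth_fn E_r" "smooth_fn E_s"
    and periodic: "x_periodic R" "x_periodic S" "\<And>i. x_periodic (U i)" "\<And>i. x_periodic (Bm i)"
      "x_periodic E" "x_periodic E_r" "x_periodic E_s"
    and chain_rule: "\<And>j p. Dx j E p = E_r p * Dx j R p + E_s p * Dx j S p"
begin

definition curl_B :: "3 \<Rightarrow> spacetime \<Rightarrow> real" where
  "curl_B i p =
    (if i = 1 then Dx 2 (Bm 3) p - Dx 3 (Bm 2) p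
     else if i = 2 then Dx 3 (Bm 1) p - Dx 1 (Bm 3) p
     else Dx 1 (Bm 2) p - Dx 2 (Bm 1) p)"

lemma curl_B_simps:
  "curl_B 1 p = Dx 2 (Bm 3) p - Dx 3 (Bm 2) p"
  "curl_B 2 p = Dx 3 (Bm 1) p - Dx 1 (Bm 3) p"
  "curl_B 3 p = Dx 1 (Bm 2) p - Dx 2 (Bm 1) p"
  by (simp_all add: curl_B_def)

definition B_cross_curl_B :: "3 \<Rightarrow> spacetime \<Rightarrow> real" where
  "B_cross_curl_B i p =
    (if i = 1 then Bm 2 p * curl_B 3 p - curl_B 2 p * Bm 3 p
     else if i = 2 then Bm 3 p * curl_B 1 p - curl_B 3 p * Bm 1 p
     else Bm 1 p * curl_B 2 p - curl_B 1 p * Bm 2 p)"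

lemma B_cross_curl_B_simps:
  "B_cross_curl_B 1 p = Bm 2 p * curl_B 3 p - curl_B 2 p * Bm 3 p"
  "B_cross_curl_B 2 p = Bm 3 p * curl_B 1 p - curl_B 3 p * Bm 1 p"
  "B_cross_curl_B 3 p = Bm 1 p * curl_B 2 p - curl_B 1 p * Bm 2 p"
  by (simp_all add: B_cross_curl_B_def)

definition press :: "spacetime \<Rightarrow> real" where
  "press q = R q * (R q * E_r q + S q * E_s q)"

definition residual :: "3 \<Rightarrow> spacetime \<Rightarrow> real" where
  "residual i p = R p * Dt (U i) p + R p * (\<Sum>j\<in>UNIV. U j p * Dx j (U i) p) + Dx i press p
     + B_cross_curl_B i p - (\<Sum>j\<in>UNIV. Dx j (\<lambda>q. \<mu> * Dx j (U i) q) p)"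

lemma smooth_fn_press: "smooth_fn press"
  unfolding press_def[abs_def] by (simp add: smooth_fn_intros smooth)

lemma smooth_fn_curl_B: "smooth_fn (curl_B i)"
  using exhaust_3[of i] by (auto simp: curl_B_def[abs_def] smooth_fn_intros smooth)

lemma smooth_fn_residual: "smooth_fn (residual i)"
proof -
  have "smooth_fn (B_cross_curl_B i)"
    using exhaust_3[of i] by (auto simp: B_cross_curl_B_def[abs_def] smooth_fn_intros smooth smooth_fn_curl_B)
  then show ?thesis
    unfolding residual_def[abs_def] by (simp add: smooth_fn_intros smooth smooth_fn_press sum_3)
qed

lemma x_periodic_residual: "x_periodic (residual i)"
proof -
  have "x_periodic (curl_B k)" for k
    using exhaust_3[of k] by (auto simp: curl_B_def[abs_def] x_periodic_intros periodic smooth)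
  then have "x_periodic (B_cross_curl_B i)"
    using exhaust_3[of i] by (auto simp: B_cross_curl_B_def[abs_def] x_periodic_intros periodic)
  moreover have "x_periodic press"
    unfolding press_def[abs_def] by (simp add: x_periodic_intros periodic)
  ultimately show ?thesis
    unfolding residual_def[abs_def] by (intro x_periodic_intros periodic smooth smooth_fn_intros smooth_fn_press)
qed

end

text \<open>\<open>V\<close> is the test field \<open>v\<close>; \<open>variation_density\<close> is the integrand of \<open>\<delta>S\<close> after \<open>\<delta>s\<close> has been
  eliminated with the entropy constraint, and \<open>bernoulli\<close> is \<open>|u|\<^sup>2/2\<close> minus the specific enthalpy
  \<open>e + \<rho> \<partial>\<^sub>\<rho>e\<close>.\<close>

locale mhd_test_field = mhd_components +
  fixes V :: "3 \<Rightarrow> spacetime \<Rightarrow> real"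
  assumes smooth_V: "\<And>i. smooth_fn (V i)" and periodic_V: "\<And>i. x_periodic (V i)"
begin

lemmas smooth_all = smooth smooth_V

definition bernoulli :: "spacetime \<Rightarrow> real" where
  "bernoulli q = (U 1 q * U 1 q + U 2 q * U 2 q + U 3 q * U 3 q) / 2 - E q - R q * E_r q"

definition u_dot_v :: "spacetime \<Rightarrow> real" where
  "u_dot_v q = U 1 q * V 1 q + U 2 q * V 2 q + U 3 q * V 3 q"

definition delta_u :: "3 \<Rightarrow> spacetime \<Rightarrow> real" where
  "delta_u i p = Dt (V i) p + (U 1 p * Dx 1 (V i) p + U 2 p * Dx 2 (V i) p + U 3 p * Dx 3 (V i) p)
     - (V 1 p * Dx 1 (U i) p + V 2 p * Dx 2 (U i) p + V 3 p * Dx 3 (U i) p)"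

definition BxV1 :: "spacetime \<Rightarrow> real" where "BxV1 q = Bm 2 q * V 3 q - V 2 q * Bm 3 q"
definition BxV2 :: "spacetime \<Rightarrow> real" where "BxV2 q = Bm 3 q * V 1 q - V 3 q * Bm 1 q"
definition BxV3 :: "spacetime \<Rightarrow> real" where "BxV3 q = Bm 1 q * V 2 q - V 1 q * Bm 2 q"

definition variation_density :: "spacetime \<Rightarrow> real" where
  "variation_density p =
     (- (\<Sum>j\<in>UNIV. Dx j (\<lambda>q. R q * V j q) p)) * bernoulli p
     + R p * (U 1 p * delta_u 1 p + U 2 p * delta_u 2 p + U 3 p * delta_u 3 p)
     - \<mu> * (\<Sum>i\<in>UNIV. \<Sum>j\<in>UNIV. Dx j (U i) p * Dx j (V i) p)
     + R p * E_s p * (\<Sum>j\<in>UNIV. Dx j (\<lambda>q. S q * V j q) p)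
     - (Bm 1 p * (- (Dx 2 BxV3 p - Dx 3 BxV2 p)) + Bm 2 p * (- (Dx 3 BxV1 p - Dx 1 BxV3 p))
        + Bm 3 p * (- (Dx 1 BxV2 p - Dx 2 BxV1 p)))"

definition magnetic_flux :: "3 \<Rightarrow> spacetime \<Rightarrow> real" where
  "magnetic_flux j q =
    (if j = 1 then BxV2 q * Bm 3 q - BxV3 q * Bm 2 q
     else if j = 2 then BxV3 q * Bm 1 q - BxV1 q * Bm 3 q
     else BxV1 q * Bm 2 q - BxV2 q * Bm 1 q)"

lemma magnetic_flux_simps:
  "magnetic_flux 1 = (\<lambda>q. BxV2 q * Bm 3 q - BxV3 q * Bm 2 q)"
  "magnetic_flux 2 = (\<lambda>q. BxV3 q * Bm 1 q - BxV1 q * Bm 3 q)"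
  "magnetic_flux 3 = (\<lambda>q. BxV1 q * Bm 2 q - BxV2 q * Bm 1 q)"
  by (simp_all add: magnetic_flux_def fun_eq_iff)

definition flux :: "3 \<Rightarrow> spacetime \<Rightarrow> real" where
  "flux j q = - (R q * V j q * bernoulli q) + R q * U j q * u_dot_v q
     + (- (\<Sum>i\<in>UNIV. \<mu> * Dx j (U i) q * V i q)) + R q * E_s q * S q * V j q + magnetic_flux j q"

lemma smooth_fn_bernoulli: "smooth_fn bernoulli"
  and smooth_fn_u_dot_v: "smooth_fn u_dot_v"
  and smooth_fn_BxV: "smooth_fn BxV1" "smooth_fn BxV2" "smooth_fn BxV3"
  unfolding bernoulli_def[abs_def] u_dot_v_def[abs_def] BxV1_def[abs_def] BxV2_def[abs_def] BxV3_def[abs_def]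
  by (simp_all add: smooth_fn_intros smooth_all)

lemma smooth_fn_magnetic_flux: "smooth_fn (magnetic_flux j)"
  using exhaust_3[of j] by (auto simp: magnetic_flux_simps smooth_fn_intros smooth_all smooth_fn_BxV)

lemma smooth_fn_flux: "smooth_fn (flux j)"
  unfolding flux_def[abs_def]
  by (simp add: smooth_fn_intros smooth_all smooth_fn_bernoulli smooth_fn_u_dot_v smooth_fn_magnetic_flux sum_3)

lemma x_periodic_flux: "x_periodic (flux j)"
proof -
  have "x_periodic BxV1" "x_periodic BxV2" "x_periodic BxV3"
    unfolding BxV1_def[abs_def] BxV2_def[abs_def] BxV3_def[abs_def]
    by (simp_all add: x_periodic_intros periodic periodic_V)
  then have "x_periodic (magnetic_flux j)"
    using exhaust_3[of j] by (auto simp: magnetic_flux_simps x_periodic_intros periodic periodic_V)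
  moreover have "x_periodic bernoulli" "x_periodic u_dot_v"
    unfolding bernoulli_def[abs_def] u_dot_v_def[abs_def] by (simp_all add: x_periodic_intros periodic periodic_V)
  ultimately show ?thesis
    unfolding flux_def[abs_def] by (intro x_periodic_intros periodic periodic_V smooth_all)
qed

text \<open>The five product-rule expansions below, one per term of \<open>variation_density\<close>, split each
  term into a divergence and a remainder that no longer differentiates \<open>V\<close>.\<close>

lemma delta_rho_term_eq:
  "(- (Dx 1 (\<lambda>q. R q * V 1 q) p + Dx 2 (\<lambda>q. R q * V 2 q) p + Dx 3 (\<lambda>q. R q * V 3 q) p)) * bernoulli p
   = Dx 1 (\<lambda>q. - (R q * V 1 q * bernoulli q)) p + Dx 2 (\<lambda>q. - (R q * V 2 q * bernoulli q)) p
     + Dx 3 (\<lambda>q. - (R q * V 3 q * bernoulli q)) p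
     + (R p * V 1 p * Dx 1 bernoulli p + R p * V 2 p * Dx 2 bernoulli p + R p * V 3 p * Dx 3 bernoulli p)"
  by (simp add: D_simps smooth_fn_intros smooth_all smooth_fn_bernoulli algebra_simps)

lemma kinetic_term_eq:
  "R p * (U 1 p * delta_u 1 p + U 2 p * delta_u 2 p + U 3 p * delta_u 3 p) =
   Dt (\<lambda>q. R q * u_dot_v q) p + (\<Sum>j\<in>UNIV. Dx j (\<lambda>q. R q * U j q * u_dot_v q) p) - Dt R p * u_dot_v p
   - (\<Sum>i\<in>UNIV. R p * Dt (U i) p * V i p)
   - (\<Sum>i\<in>UNIV. \<Sum>j\<in>UNIV. Dx j (\<lambda>q. R q * U j q * U i q) p * V i p)
   - (\<Sum>i\<in>UNIV. \<Sum>j\<in>UNIV. R p * U i p * V j p * Dx j (U i) p)"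
  unfolding delta_u_def
  by (simp add: D_simps smooth_fn_intros smooth_all smooth_fn_u_dot_v sum_3 u_dot_v_def algebra_simps)

lemma viscous_term_eq:
  "- \<mu> * (\<Sum>i\<in>UNIV. \<Sum>j\<in>UNIV. Dx j (U i) p * Dx j (V i) p) =
   (\<Sum>j\<in>UNIV. Dx j (\<lambda>q. - (\<Sum>i\<in>UNIV. \<mu> * Dx j (U i) q * V i q)) p)
   + (\<Sum>i\<in>UNIV. \<Sum>j\<in>UNIV. Dx j (\<lambda>q. \<mu> * Dx j (U i) q) p * V i p)"
  by (simp add: D_simps smooth_fn_intros smooth_all sum_3 algebra_simps)

lemma entropy_term_eq:
  "R p * E_s p * (\<Sum>j\<in>UNIV. Dx j (\<lambda>q. S q * V j q) p) =
   (\<Sum>j\<in>UNIV. Dx j (\<lambda>q. R q * E_s q * S q * V j q) p) - (\<Sum>j\<in>UNIV. Dx j (\<lambda>q. R q * E_s q) p * S p * V j p)"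
  by (simp add: D_simps smooth_fn_intros smooth_all sum_3 algebra_simps)

lemma magnetic_term_eq:
  "- (Bm 1 p * (- (Dx 2 BxV3 p - Dx 3 BxV2 p)) + Bm 2 p * (- (Dx 3 BxV1 p - Dx 1 BxV3 p))
      + Bm 3 p * (- (Dx 1 BxV2 p - Dx 2 BxV1 p)))
   = (\<Sum>j\<in>UNIV. Dx j (magnetic_flux j) p) + (BxV1 p * curl_B 1 p + BxV2 p * curl_B 2 p + BxV3 p * curl_B 3 p)"
  by (simp add: D_simps smooth_fn_intros smooth_all smooth_fn_BxV curl_B_simps magnetic_flux_simps sum_3
      algebra_simps)

text \<open>The remainders add up to \<open>-residual \<cdot> V\<close>; this is where the continuity equation and the chain
  rule for \<open>E\<close> enter.\<close>

lemma remainder_eq_residual: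
  assumes "Dt R p = - (\<Sum>j\<in>UNIV. Dx j (\<lambda>q. R q * U j q) p)"
  shows "(\<Sum>j\<in>UNIV. R p * V j p * Dx j bernoulli p) - Dt R p * u_dot_v p
    - (\<Sum>i\<in>UNIV. R p * Dt (U i) p * V i p)
    - (\<Sum>i\<in>UNIV. \<Sum>j\<in>UNIV. Dx j (\<lambda>q. R q * U j q * U i q) p * V i p)
    - (\<Sum>i\<in>UNIV. \<Sum>j\<in>UNIV. R p * U i p * V j p * Dx j (U i) p)
    + (\<Sum>i\<in>UNIV. \<Sum>j\<in>UNIV. Dx j (\<lambda>q. \<mu> * Dx j (U i) q) p * V i p)
    - (\<Sum>j\<in>UNIV. Dx j (\<lambda>q. R q * E_s q) p * S p * V j p)
    + (BxV1 p * curl_B 1 p + BxV2 p * curl_B 2 p + BxV3 p * curl_B 3 p)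
    = - (\<Sum>i\<in>UNIV. residual i p * V i p)"
proof -
  have continuity: "Dt R p = - (R p * Dx 1 (U 1) p + Dx 1 R p * U 1 p + (R p * Dx 2 (U 2) p + Dx 2 R p * U 2 p)
      + (R p * Dx 3 (U 3) p + Dx 3 R p * U 3 p))"
    using assms by (simp add: D_simps smooth_fn_intros smooth_all sum_3)
  show ?thesis
    unfolding residual_def bernoulli_def[abs_def] press_def[abs_def] u_dot_v_def BxV1_def BxV2_def BxV3_def
    by (simp add: D_simps smooth_fn_intros smooth_all sum_3 chain_rule continuity B_cross_curl_B_simps
        curl_B_simps algebra_simps add_divide_distrib)
qed

lemma Dx_flux:
  "Dx j (flux j) p = Dx j (\<lambda>q. - (R q * V j q * bernoulli q)) p + Dx j (\<lambda>q. R q * U j q * u_dot_v q) p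
     + Dx j (\<lambda>q. - (\<Sum>i\<in>UNIV. \<mu> * Dx j (U i) q * V i q)) p + Dx j (\<lambda>q. R q * E_s q * S q * V j q) p
     + Dx j (magnetic_flux j) p"
proof -
  have "smooth_fn (\<lambda>q. - (R q * V j q * bernoulli q))" "smooth_fn (\<lambda>q. R q * U j q * u_dot_v q)"
    "smooth_fn (\<lambda>q. - (\<Sum>i\<in>UNIV. \<mu> * Dx j (U i) q * V i q))" "smooth_fn (\<lambda>q. R q * E_s q * S q * V j q)"
    by (simp_all add: smooth_fn_intros smooth_all smooth_fn_bernoulli smooth_fn_u_dot_v sum_3)
  moreover have "flux j = (\<lambda>q. (((- (R q * V j q * bernoulli q) + R q * U j q * u_dot_v q)
      + (- (\<Sum>i\<in>UNIV. \<mu> * Dx j (U i) q * V i q))) + R q * E_s q * S q * V j q) + magnetic_flux j q)"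
    by (simp add: flux_def[abs_def])
  ultimately show ?thesis
    using smooth_fn_magnetic_flux by (simp only: Dx_add smooth_fn_add)
qed

lemma variation_density_eq:
  assumes "Dt R p = - (\<Sum>j\<in>UNIV. Dx j (\<lambda>q. R q * U j q) p)"
  shows "variation_density p
    = - (\<Sum>i\<in>UNIV. residual i p * V i p) + Dt (\<lambda>q. R q * u_dot_v q) p + (\<Sum>j\<in>UNIV. Dx j (flux j) p)"
proof -
  have "(- (\<Sum>j\<in>UNIV. Dx j (\<lambda>q. R q * V j q) p)) * bernoulli p =
     (\<Sum>j\<in>UNIV. Dx j (\<lambda>q. - (R q * V j q * bernoulli q)) p) + (\<Sum>j\<in>UNIV. R p * V j p * Dx j bernoulli p)"
    using delta_rho_term_eq[of p] by (simp add: sum_3)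
  moreover have "(\<Sum>j\<in>UNIV. Dx j (flux j) p) = (\<Sum>j\<in>UNIV. Dx j (\<lambda>q. - (R q * V j q * bernoulli q)) p)
     + (\<Sum>j\<in>UNIV. Dx j (\<lambda>q. R q * U j q * u_dot_v q) p)
     + (\<Sum>j\<in>UNIV. Dx j (\<lambda>q. - (\<Sum>i\<in>UNIV. \<mu> * Dx j (U i) q * V i q)) p)
     + (\<Sum>j\<in>UNIV. Dx j (\<lambda>q. R q * E_s q * S q * V j q) p) + (\<Sum>j\<in>UNIV. Dx j (magnetic_flux j) p)"
    by (simp only: Dx_flux sum.distrib)
  ultimately show ?thesis
    unfolding variation_density_def
    using kinetic_term_eq[of p] viscous_term_eq[of p] entropy_term_eq[of p] magnetic_term_eq[of p]
      remainder_eq_residual[OF assms]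
    by linarith
qed

lemma integral_variation_density:
  assumes "\<And>i x. V i (0, x) = 0" "\<And>i x. V i (Tf, x) = 0" and "0 \<le> Tf"
    and "\<And>p. p \<in> slab Tf \<Longrightarrow> Dt R p = - (\<Sum>j\<in>UNIV. Dx j (\<lambda>q. R q * U j q) p)"
  shows "integral (slab Tf) variation_density = - integral (slab Tf) (\<lambda>p. \<Sum>i\<in>UNIV. residual i p * V i p)"
proof -
  have sG: "smooth_fn (\<lambda>q. R q * u_dot_v q)"
    by (simp add: smooth_fn_intros smooth_all smooth_fn_u_dot_v)
  have "smooth_fn (\<lambda>p. \<Sum>i\<in>UNIV. residual i p * V i p)" "smooth_fn (\<lambda>p. \<Sum>j\<in>UNIV. Dx j (flux j) p)"
    by (simp_all add: smooth_fn_intros smooth_all smooth_fn_residual smooth_fn_flux sum_3)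
  note integrable = this[THEN smooth_fn_integrable_on_slab] smooth_fn_integrable_on_slab[OF smooth_fn_Dt[OF sG]]
  have "integral (slab Tf) variation_density = integral (slab Tf)
      (\<lambda>p. - (\<Sum>i\<in>UNIV. residual i p * V i p) + Dt (\<lambda>q. R q * u_dot_v q) p + (\<Sum>j\<in>UNIV. Dx j (flux j) p))"
    using assms(4) by (intro integral_cong variation_density_eq)
  also have "\<dots> = - integral (slab Tf) (\<lambda>p. \<Sum>i\<in>UNIV. residual i p * V i p)
      + integral (slab Tf) (Dt (\<lambda>q. R q * u_dot_v q)) + integral (slab Tf) (\<lambda>p. \<Sum>j\<in>UNIV. Dx j (flux j) p)"
    using integrable by (simp add: integral_add integral_diff integrable_add integrable_diff)
  also have "integral (slab Tf) (Dt (\<lambda>q. R q * u_dot_v q)) = 0"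
    by (rule integral_slab_Dt[OF sG _ _ assms(3)]) (simp_all add: u_dot_v_def assms(1,2))
  also have "integral (slab Tf) (\<lambda>p. \<Sum>j\<in>UNIV. Dx j (flux j) p) = (\<Sum>j\<in>UNIV. integral (slab Tf) (Dx j (flux j)))"
    by (rule integral_sum) (auto intro: smooth_fn_integrable_on_slab smooth_fn_Dx smooth_fn_flux)
  also have "\<dots> = 0"
    by (rule sum.neutral) (use integral_slab_Dx smooth_fn_flux x_periodic_flux x_periodicD in blast)
  finally show ?thesis by simp
qed

end

section \<open>Periodic test functions\<close>

lemma abs_sin_pi_add_int: "\<bar>sin (pi * (w + of_int k))\<bar> = \<bar>sin (pi * w)\<bar>"
  by (simp add: distrib_left sin_add abs_mult)

lemma abs_sin_pi_eq_sin_pi_abs: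
  assumes "\<bar>w\<bar> \<le> 1"
  shows "\<bar>sin (pi * w)\<bar> = sin (pi * \<bar>w\<bar>)"
proof -
  have "0 \<le> sin (pi * \<bar>w\<bar>)"
    using mult_left_mono[OF assms, of pi] by (intro sin_ge_zero) auto
  then show ?thesis by (cases "w \<ge> 0") auto
qed

lemma near_int_if_abs_sin_pi_less:
  assumes "0 < \<eta>" "\<eta> \<le> 1/2" "\<bar>sin (pi * w)\<bar> < sin (pi * \<eta>)"
  shows "\<exists>k::int. \<bar>w - of_int k\<bar> < \<eta>"
proof (rule ccontr)
  assume "\<nexists>k::int. \<bar>w - of_int k\<bar> < \<eta>"
  then have far: "\<eta> \<le> \<bar>w - of_int (round w)\<bar>" by (meson not_less)
  define w' where "w' = w - of_int (round w)"
  have w': "\<bar>w'\<bar> \<le> 1/2" unfolding w'_def using of_int_round_abs_le[of w] by linarith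
  have "\<bar>sin (pi * w)\<bar> = sin (pi * \<bar>w'\<bar>)"
    using abs_sin_pi_add_int[of w' "round w"] abs_sin_pi_eq_sin_pi_abs[of w'] w' by (simp add: w'_def)
  also have "\<dots> \<ge> sin (pi * \<eta>)"
  proof (rule sin_monotone_2pi_le)
    show "- (pi / 2) \<le> pi * \<eta>" using mult_pos_pos[OF pi_gt_zero assms(1)] pi_gt_zero by linarith
    show "pi * \<eta> \<le> pi * \<bar>w'\<bar>" using far by (simp add: w'_def)
    show "pi * \<bar>w'\<bar> \<le> pi / 2" using mult_left_mono[OF w', of pi] by simp
  qed
  finally show False using assms(3) by simp
qed

text \<open>A smooth nonnegative test function, \<open>1\<close>-periodic in each space variable, positive exactly
  where \<open>|t - t\<^sub>1| < \<eta>\<close> and every \<open>x\<^sub>j\<close> is within \<open>\<eta> \<le> 1/2\<close> of \<open>c\<^sub>j\<close> modulo \<open>1\<close>; the factor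
  \<open>sin(\<pi>(y - c))\<close> is what makes it periodic.\<close>

definition periodic_bump :: "real \<Rightarrow> real \<Rightarrow> real \<Rightarrow> real" where
  "periodic_bump c \<eta> y = bump (sin (pi * (y - c)) / sin (pi * \<eta>))"

definition test_bump :: "real \<Rightarrow> real \<Rightarrow> real^3 \<Rightarrow> spacetime \<Rightarrow> real" where
  "test_bump t1 \<eta> c p = bump ((fst p - t1) / \<eta>) * (\<Prod>j\<in>UNIV. periodic_bump (c $ j) \<eta> (snd p $ j))"

lemma periodic_bump_add_1: "periodic_bump c \<eta> (y + 1) = periodic_bump c \<eta> y"
proof -
  have "sin (pi * (y + 1 - c)) = - sin (pi * (y - c))"
    using sin_periodic_pi[of "pi * (y - c)"] by (simp add: algebra_simps)
  then show ?thesis unfolding periodic_bump_def by (metis bump_minus minus_divide_left)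
qed

lemma test_bump_nonneg: "0 \<le> test_bump t1 \<eta> c p"
  by (simp add: test_bump_def periodic_bump_def bump_nonneg prod_nonneg)

lemma test_bump_center: "0 < test_bump t1 \<eta> c (t1, c)"
  using bump_pos_iff[of 0] by (simp add: test_bump_def periodic_bump_def prod_pos)

lemma test_bump_far_in_time:
  assumes "0 < \<eta>" "\<eta> \<le> \<bar>t - t1\<bar>"
  shows "test_bump t1 \<eta> c (t, x) = 0"
proof -
  have "1 \<le> \<bar>(t - t1) / \<eta>\<bar>"
    using assms by (simp add: abs_divide)
  then show ?thesis by (simp add: test_bump_def bump_eq_0_iff)
qed

lemma x_periodic_test_bump: "x_periodic (test_bump t1 \<eta> c)"
proof -
  have "periodic_bump (c $ k) \<eta> ((x + axis j 1) $ k) = periodic_bump (c $ k) \<eta> (x $ k)" for x k j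
    by (cases "k = j") (simp_all add: axis_def periodic_bump_add_1)
  then show ?thesis by (simp add: x_periodic_def test_bump_def)
qed

lemma smooth_fn_test_bump: "smooth_fn (test_bump t1 \<eta> c)"
proof -
  have "smooth_fn (\<lambda>p::spacetime. (fst p - t1) / \<eta>)"
    by (intro smooth_fn_divide_const smooth_fn_diff smooth_fn_linear bounded_linear_fst smooth_fn_const)
  moreover have "smooth_fn (\<lambda>p::spacetime. sin (pi * (snd p $ j - c $ j)) / sin (pi * \<eta>))" for j
    by (intro smooth_fn_divide_const smooth_fn_compose_real[OF smooth_fn_sin] smooth_fn_mult smooth_fn_const
        smooth_fn_diff smooth_fn_linear bounded_linear_compose[OF bounded_linear_vec_nth bounded_linear_snd])
  ultimately show ?thesis
    unfolding test_bump_def[abs_def] periodic_bump_def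
    by (intro smooth_fn_mult smooth_fn_prod smooth_fn_compose_real[OF smooth_fn_bump]) auto
qed

lemma test_bump_support:
  assumes "0 < \<eta>" "\<eta> \<le> 1/4" "test_bump t1 \<eta> c (t, x) \<noteq> 0"
  shows "\<exists>k. dist (t, x - (\<chi> j. of_int (k j))) (t1, c) < 4 * \<eta>"
proof -
  have sin_pos: "0 < sin (pi * \<eta>)"
    using assms(1,2) by (intro sin_gt_zero) auto
  have "bump ((t - t1) / \<eta>) \<noteq> 0" and "\<And>j. periodic_bump (c $ j) \<eta> (x $ j) \<noteq> 0"
    using assms(3) by (auto simp: test_bump_def)
  then have t: "\<bar>t - t1\<bar> < \<eta>" and "\<And>j. \<bar>sin (pi * (x $ j - c $ j))\<bar> < sin (pi * \<eta>)"
    using assms(1) sin_pos by (auto simp: bump_eq_0_iff periodic_bump_def abs_divide not_le)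
  then have "\<forall>j. \<exists>k::int. \<bar>(x $ j - c $ j) - of_int k\<bar> < \<eta>"
    using near_int_if_abs_sin_pi_less[OF assms(1)] assms(2) by simp
  then obtain k where k: "\<And>j. \<bar>(x $ j - c $ j) - of_int (k j)\<bar> < \<eta>"
    by metis
  define y where "y = x - (\<chi> j. of_int (k j))"
  have y: "\<bar>y $ j - c $ j\<bar> < \<eta>" for j
    using k[of j] by (simp add: y_def algebra_simps)
  have "(\<Sum>j\<in>UNIV. \<bar>y $ j - c $ j\<bar>) < 3 * \<eta>"
    using y[of 1] y[of 2] y[of 3] by (simp add: sum_3)
  moreover have "dist (t, y) (t1, c) \<le> \<bar>t - t1\<bar> + (\<Sum>j\<in>UNIV. \<bar>y $ j - c $ j\<bar>)"
    using norm_Pair_le[of "t - t1" "y - c"] norm_le_l1_cart[of "y - c"] by (simp add: dist_norm)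
  ultimately have "dist (t, y) (t1, c) < 4 * \<eta>"
    using t by linarith
  then show ?thesis unfolding y_def by blast
qed

lemma isCont_sign_preserving:
  fixes F :: "'a::metric_space \<Rightarrow> real"
  assumes "isCont F a" "F a \<noteq> 0"
  obtains \<epsilon> where "0 < \<epsilon>" "\<And>q. dist q a < \<epsilon> \<Longrightarrow> 0 < F q * F a"
proof -
  have "isCont (\<lambda>q. F q * F a) a"
    using assms(1) by (intro continuous_intros)
  then have "((\<lambda>q. F q * F a) \<longlongrightarrow> F a * F a) (nhds a)"
    using tendsto_at_iff_tendsto_nhds[of "\<lambda>q. F q * F a" a] by (simp add: isCont_def)
  moreover have "0 < F a * F a"
    using assms(2) by (auto simp: zero_less_mult_iff linorder_neq_iff)
  ultimately have "\<forall>\<^sub>F q in nhds a. 0 < F q * F a"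
    by (rule order_tendstoD(1))
  then show ?thesis
    using that unfolding eventually_nhds_metric by blast
qed

lemma test_bump_weight_nonneg:
  fixes F :: "spacetime \<Rightarrow> real"
  assumes "x_periodic F" "0 < \<eta>" "\<eta> \<le> 1/4" and pos: "\<And>q. dist q (t1, c) < 4 * \<eta> \<Longrightarrow> 0 < F q * r"
  shows "0 \<le> F q * (r * test_bump t1 \<eta> c q)"
proof (cases "test_bump t1 \<eta> c q = 0")
  case False
  obtain t x where q: "q = (t, x)" by (cases q)
  obtain k where "dist (t, x - (\<chi> j. of_int (k j))) (t1, c) < 4 * \<eta>"
    using test_bump_support[OF assms(2,3) False[unfolded q]] by blast
  then have "0 < F (t, x - (\<chi> j. of_int (k j))) * r"
    by (rule pos)
  then have "0 < F q * r"
    using x_periodic_int_vec_shift[OF assms(1), of t "x - (\<chi> j. of_int (k j))" k] by (simp add: q)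
  then show ?thesis
    using test_bump_nonneg[of t1 \<eta> c q] by (simp add: mult.assoc[symmetric])
qed simp

lemma fundamental_lemma_slab_interior:
  fixes F :: "spacetime \<Rightarrow> real"
  assumes F: "smooth_fn F" "x_periodic F"
    and orth: "\<And>\<phi>. smooth_fn \<phi> \<Longrightarrow> x_periodic \<phi> \<Longrightarrow> (\<And>x. \<phi> (0, x) = 0) \<Longrightarrow> (\<And>x. \<phi> (Tf, x) = 0)
      \<Longrightarrow> integral (slab Tf) (\<lambda>p. F p * \<phi> p) = 0"
    and t1: "0 < t1" "t1 < Tf"
  shows "F (t1, x0) = 0"
proof (rule ccontr)
  assume "F (t1, x0) \<noteq> 0"
  define c :: "real^3" where "c = (\<chi> j. x0 $ j - of_int \<lfloor>x0 $ j\<rfloor>)"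
  have c: "(t1, c) \<in> slab Tf"
    using t1 by (simp add: c_def slab_def cbox_Pair_iff mem_box_cart frac_lt_1[unfolded frac_def] less_imp_le)
  have "x0 = c + (\<chi> j. of_int \<lfloor>x0 $ j\<rfloor>)"
    by (simp add: c_def vec_eq_iff)
  then have "F (t1, c) \<noteq> 0"
    using \<open>F (t1, x0) \<noteq> 0\<close> x_periodic_int_vec_shift[OF F(2), of t1 c "\<lambda>j. \<lfloor>x0 $ j\<rfloor>"] by simp
  then obtain \<epsilon> where \<epsilon>: "0 < \<epsilon>" "\<And>q. dist q (t1, c) < \<epsilon> \<Longrightarrow> 0 < F q * F (t1, c)"
    using isCont_sign_preserving smooth_fn_isCont[OF F(1)] by metis
  define \<eta> where "\<eta> = min (min (\<epsilon> / 4) (1 / 4)) (min t1 (Tf - t1))"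
  have \<eta>: "0 < \<eta>" "\<eta> \<le> 1/4" "4 * \<eta> \<le> \<epsilon>" "\<eta> \<le> t1" "\<eta> \<le> Tf - t1"
    using \<epsilon>(1) t1 unfolding \<eta>_def by (auto simp: min_def)
  define \<phi> where "\<phi> p = F (t1, c) * test_bump t1 \<eta> c p" for p
  have smooth_\<phi>: "smooth_fn \<phi>"
    unfolding \<phi>_def[abs_def] by (rule smooth_fn_mult[OF smooth_fn_const smooth_fn_test_bump])
  have smooth_h: "smooth_fn (\<lambda>p. F p * \<phi> p)"
    by (rule smooth_fn_mult[OF F(1) smooth_\<phi>])
  have "integral (slab Tf) (\<lambda>p. F p * \<phi> p) = 0"
  proof (rule orth[OF smooth_\<phi>])
    show "x_periodic \<phi>"
      unfolding \<phi>_def[abs_def] by (rule x_periodic_mult[OF x_periodic_const x_periodic_test_bump])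
  qed (use \<eta> in \<open>simp_all add: \<phi>_def test_bump_far_in_time\<close>)
  then have "((\<lambda>p. F p * \<phi> p) has_integral 0) (slab Tf)"
    using smooth_fn_integrable_on_slab[OF smooth_h] by (metis integrable_integral)
  moreover have "0 \<le> F q * \<phi> q" for q
    unfolding \<phi>_def using \<epsilon>(2) \<eta>(3) by (intro test_bump_weight_nonneg[OF F(2) \<eta>(1,2)]) simp
  moreover have "(Tf / 2, (\<chi> i. 1 / 2) :: real^3) \<in> box (0, 0) (Tf, \<chi> i. 1)"
    using t1 by (simp add: mem_box Basis_prod_def Basis_vec_def inner_axis)
  ultimately have "F (t1, c) * \<phi> (t1, c) = 0"
    using smooth_fn_continuous_on[OF smooth_h] c unfolding slab_def
    by (intro has_integral_0_cbox_imp_0[where f = "\<lambda>p. F p * \<phi> p"]) blast+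
  moreover have "0 < F (t1, c) * \<phi> (t1, c)"
    using \<open>F (t1, c) \<noteq> 0\<close> test_bump_center[of t1 \<eta> c]
    by (auto simp: \<phi>_def mult.assoc[symmetric] zero_less_mult_iff linorder_neq_iff)
  ultimately show False by linarith
qed

lemma fundamental_lemma_slab:
  fixes F :: "spacetime \<Rightarrow> real"
  assumes "smooth_fn F" "x_periodic F" "0 < Tf"
    and "\<And>\<phi>. smooth_fn \<phi> \<Longrightarrow> x_periodic \<phi> \<Longrightarrow> (\<And>x. \<phi> (0, x) = 0) \<Longrightarrow> (\<And>x. \<phi> (Tf, x) = 0)
      \<Longrightarrow> integral (slab Tf) (\<lambda>p. F p * \<phi> p) = 0"
    and "t \<in> {0..Tf}"
  shows "F (t, x) = 0"
proof -
  have "continuous_on UNIV (\<lambda>t. F (t, x))"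
    by (rule continuous_on_compose2[OF smooth_fn_continuous_on[OF assms(1)]]) (auto intro!: continuous_intros)
  then have "continuous_on (closure {0<..<Tf}) (\<lambda>t. F (t, x))"
    by (rule continuous_on_subset) simp
  moreover have "F (t, x) = 0" if "t \<in> {0<..<Tf}" for t
    using that by (intro fundamental_lemma_slab_interior[OF assms(1,2,4)]) auto
  moreover have "t \<in> closure {0<..<Tf}"
    using assms(3,5) by simp
  ultimately show ?thesis
    by (rule continuous_constant_on_closure)
qed

section \<open>The MHD fields\<close>

definition component :: "vfield \<Rightarrow> 3 \<Rightarrow> spacetime \<Rightarrow> real" where
  "component w i p = w (fst p) (snd p) $ i"

lemma component_Pair [simp]: "component w i (t, x) = w t x $ i"
  by (simp add: component_def)

lemma smooth_fn_component: "smooth_vf w \<Longrightarrow> smooth_fn (component w i)"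
  by (simp add: smooth_vf_def component_def[abs_def])

lemma smooth_fn_case_prod: "smooth_sf f \<Longrightarrow> smooth_fn (case_prod f)"
  by (simp add: smooth_sf_def case_prod_beta')

lemma x_periodic_component: "\<forall>t. periodic3 (w t) \<Longrightarrow> x_periodic (component w i)"
  by (simp add: x_periodic_def periodic3_def component_def)

lemma x_periodic_case_prod: "\<forall>t. periodic3 (f t) \<Longrightarrow> x_periodic (case_prod f)"
  by (simp add: x_periodic_def periodic3_def split_beta)

lemma continuous_on_vec_componentwise:
  fixes f :: "'a::topological_space \<Rightarrow> real^'n"
  assumes "\<And>i. continuous_on S (\<lambda>p. f p $ i)"
  shows "continuous_on S f"
  using continuous_on_vec_lambda[of S "\<lambda>i p. f p $ i"] assms by simp

lemma vdt_component: "smooth_vf w \<Longrightarrow> vdt w t x $ i = Dt (component w i) (t, x)"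
  using deriv_eq_Dt[OF smooth_fn_component] by (simp add: vdt_def)

lemma sdt_eq_Dt: "smooth_sf f \<Longrightarrow> sdt f t x = Dt (case_prod f) (t, x)"
  using deriv_eq_Dt[OF smooth_fn_case_prod] by (simp add: sdt_def)

lemma pdx_component: "smooth_vf w \<Longrightarrow> pdx j (\<lambda>y. w t y $ i) x = Dx j (component w i) (t, x)"
  using pdx_eq_Dx[OF smooth_fn_component] by simp

lemma adv_component:
  "smooth_vf w \<Longrightarrow> smooth_vf z \<Longrightarrow>
    adv (w t) (z t) x $ i = (\<Sum>j\<in>UNIV. component w j (t, x) * Dx j (component z i) (t, x))"
  by (simp add: adv_def pdx_component)

lemma dvg_scaleR:
  assumes "smooth_sf f" "smooth_vf w"
  shows "dvg (\<lambda>y. f t y *\<^sub>R w t y) x = (\<Sum>j\<in>UNIV. Dx j (\<lambda>q. case_prod f q * component w j q) (t, x))"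
  using pdx_eq_Dx[OF smooth_fn_mult[OF smooth_fn_case_prod smooth_fn_component], OF assms]
  by (simp add: dvg_def)

lemma frob_eq:
  "smooth_vf w \<Longrightarrow> smooth_vf z \<Longrightarrow>
    frob (w t) (z t) x = (\<Sum>i\<in>UNIV. \<Sum>j\<in>UNIV. Dx j (component w i) (t, x) * Dx j (component z i) (t, x))"
  by (simp add: frob_def pdx_component)

lemma curl_component:
  "smooth_vf w \<Longrightarrow> curl (w t) x $ i =
    (if i = 1 then Dx 2 (component w 3) (t, x) - Dx 3 (component w 2) (t, x)
     else if i = 2 then Dx 3 (component w 1) (t, x) - Dx 1 (component w 3) (t, x)
     else Dx 1 (component w 2) (t, x) - Dx 2 (component w 1) (t, x))"
  by (simp add: curl_def pdx_component)

locale mhd_setting =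
  fixes e :: "real \<Rightarrow> real \<Rightarrow> real" and \<mu> Tf :: real and u B :: vfield and \<rho> s :: sfield
  assumes Tf: "0 < Tf" and smooth_e: "smooth_fn (case_prod e)"
    and smooth_fields: "smooth_vf u" "smooth_sf \<rho>" "smooth_sf s" "smooth_vf B"
    and periodic_fields: "\<forall>t. periodic3 (u t) \<and> periodic3 (\<rho> t) \<and> periodic3 (s t) \<and> periodic3 (B t)"
    and dl_ds_nonzero: "\<forall>t\<in>{0..Tf}. \<forall>x. dl_ds e (\<rho> t x) (s t x) \<noteq> 0"
    and continuity_eq: "\<forall>t\<in>{0..Tf}. \<forall>x. sdt \<rho> t x + dvg (\<lambda>y. \<rho> t y *\<^sub>R u t y) x = 0"
begin

definition e_at :: "spacetime \<Rightarrow> real" where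
  "e_at p = e (case_prod \<rho> p) (case_prod s p)"

definition e_rho_at :: "spacetime \<Rightarrow> real" where
  "e_rho_at p = dir_deriv (case_prod e) (1, 0) (case_prod \<rho> p, case_prod s p)"

definition e_s_at :: "spacetime \<Rightarrow> real" where
  "e_s_at p = dir_deriv (case_prod e) (0, 1) (case_prod \<rho> p, case_prod s p)"

lemma smooth_fn_along_state: "smooth_fn g \<Longrightarrow> smooth_fn (\<lambda>p. g (case_prod \<rho> p, case_prod s p))"
  by (rule smooth_fn_compose) (use smooth_fields in \<open>auto simp: Basis_prod_def smooth_fn_case_prod\<close>)

lemma e_chain_rule: "Dx j e_at p = e_rho_at p * Dx j (case_prod \<rho>) p + e_s_at p * Dx j (case_prod s) p"
proof -
  have "Dx j e_at p = (\<Sum>c\<in>Basis. dir_deriv (\<lambda>q. (case_prod \<rho> q, case_prod s q) \<bullet> c) (0, axis j 1) p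
      * dir_deriv (case_prod e) c (case_prod \<rho> p, case_prod s p))"
    unfolding Dx_def e_at_def using smooth_fields smooth_e
    by (subst dir_deriv_compose[symmetric])
      (auto intro!: differentiable_Pair smooth_fn_differentiable smooth_fn_case_prod)
  then show ?thesis
    by (simp add: Basis_prod_def e_rho_at_def e_s_at_def Dx_def)
qed

sublocale mhd_components "case_prod \<rho>" "case_prod s" e_at e_rho_at e_s_at "component u" "component B" \<mu>
proof
  show "smooth_fn (case_prod \<rho>)" "smooth_fn (case_prod s)"
    "smooth_fn (component u i)" "smooth_fn (component B i)" for i
    using smooth_fields by (simp_all add: smooth_fn_case_prod smooth_fn_component)
  show "smooth_fn e_at" "smooth_fn e_rho_at" "smooth_fn e_s_at"
    unfolding e_at_def[abs_def] e_rho_at_def[abs_def] e_s_at_def[abs_def]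
    using smooth_fn_along_state[OF smooth_e]
      smooth_fn_along_state[OF smooth_fn_dir_deriv[OF smooth_e]] by (auto simp: Basis_prod_def)
  show "x_periodic (case_prod \<rho>)" "x_periodic (case_prod s)"
    "x_periodic (component u i)" "x_periodic (component B i)" for i
    using periodic_fields by (simp_all add: x_periodic_case_prod x_periodic_component)
  show "x_periodic e_at" "x_periodic e_rho_at" "x_periodic e_s_at"
    using periodic_fields
    by (auto simp: x_periodic_def periodic3_def e_at_def e_rho_at_def e_s_at_def split_beta)
qed (rule e_chain_rule)

lemma pressure_eq_press: "pressure e \<rho> s t x = press (t, x)"
  using d_rho_eq_dir_deriv[of e] d_s_eq_dir_deriv[of e] smooth_fn_differentiable[OF smooth_e]
  by (simp add: pressure_def press_def e_rho_at_def e_s_at_def)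

lemma dl_ds_eq: "dl_ds e (\<rho> t x) (s t x) = - \<rho> t x * e_s_at (t, x)"
  using d_s_eq_dir_deriv[of e] smooth_fn_differentiable[OF smooth_e] by (simp add: dl_ds_def e_s_at_def)

lemma momentum_component_eq_residual:
  "(\<rho> t x *\<^sub>R vdt u t x + \<rho> t x *\<^sub>R adv (u t) (u t) x + grad (pressure e \<rho> s t) x
     + cross3 (B t x) (curl (B t) x)) $ i - visc \<mu> (u t) x $ i = residual i (t, x)"
proof -
  have "curl (B t) x $ k = curl_B k (t, x)" for k
    using exhaust_3[of k] smooth_fields(4) by (auto simp: curl_component curl_B_simps)
  then have "cross3 (B t x) (curl (B t) x) $ i = B_cross_curl_B i (t, x)"
    using exhaust_3[of i] by (auto simp: cross_components B_cross_curl_B_simps)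
  moreover have "pressure e \<rho> s t = (\<lambda>y. press (t, y))"
    by (simp add: pressure_eq_press fun_eq_iff)
  then have "grad (pressure e \<rho> s t) x $ i = Dx i press (t, x)"
    using pdx_eq_Dx[OF smooth_fn_press] by (simp add: grad_def)
  moreover have "(\<lambda>y. \<mu> * pdx j (\<lambda>z. u t z $ i) y) = (\<lambda>y. \<mu> * Dx j (component u i) (t, y))" for j
    using smooth_fields(1) by (simp add: pdx_component)
  then have "visc \<mu> (u t) x $ i = (\<Sum>j\<in>UNIV. Dx j (\<lambda>q. \<mu> * Dx j (component u i) q) (t, x))"
    using pdx_eq_Dx[OF smooth_fn_mult[OF smooth_fn_const smooth_fn_Dx[OF smooth(3)]]] by (simp add: visc_def)
  ultimately show ?thesis
    using smooth_fields by (simp add: residual_def vdt_component adv_component)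
qed

lemma momentum_eq_iff_residual:
  "\<rho> t x *\<^sub>R vdt u t x + \<rho> t x *\<^sub>R adv (u t) (u t) x + grad (pressure e \<rho> s t) x
     + cross3 (B t x) (curl (B t) x) = visc \<mu> (u t) x \<longleftrightarrow> (\<forall>i. residual i (t, x) = 0)"
proof -
  have "(\<rho> t x *\<^sub>R vdt u t x + \<rho> t x *\<^sub>R adv (u t) (u t) x + grad (pressure e \<rho> s t) x
      + cross3 (B t x) (curl (B t) x) = visc \<mu> (u t) x) \<longleftrightarrow>
    (\<forall>i. (\<rho> t x *\<^sub>R vdt u t x + \<rho> t x *\<^sub>R adv (u t) (u t) x + grad (pressure e \<rho> s t) x
      + cross3 (B t x) (curl (B t) x)) $ i - visc \<mu> (u t) x $ i = 0)"
    by (simp add: vec_eq_iff)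
  then show ?thesis
    by (simp only: momentum_component_eq_residual)
qed

lemma continuity_eq_Dt:
  "p \<in> slab Tf \<Longrightarrow> Dt (case_prod \<rho>) p = - (\<Sum>j\<in>UNIV. Dx j (\<lambda>q. case_prod \<rho> q * component u j q) p)"
  using continuity_eq smooth_fields
  by (cases p) (auto simp: slab_def cbox_Pair_iff sdt_eq_Dt dvg_scaleR add_eq_0_iff)

end


lemma inner_vec3: "(a :: real^3) \<bullet> b = a $ 1 * b $ 1 + a $ 2 * b $ 2 + a $ 3 * b $ 3"
  by (simp add: inner_vec_def sum_3)

locale mhd_variation = mhd_setting +
  fixes v :: vfield
  assumes smooth_v: "smooth_vf v" and periodic_v: "\<forall>t. periodic3 (v t)"
begin

sublocale mhd_test_field "case_prod \<rho>" "case_prod s" e_at e_rho_at e_s_at "component u" "component B" \<mu>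
    "component v"
  using smooth_v periodic_v by unfold_locales (simp_all add: smooth_fn_component x_periodic_component)

lemma delta_u_component: "(vdt v t x + lie (u t) (v t) x) $ i = delta_u i (t, x)"
  using smooth_v smooth_fields(1) by (simp add: lie_def delta_u_def vdt_component adv_component sum_3)

lemma curl_B_cross_v_component:
  "curl (\<lambda>y. cross3 (B t y) (v t y)) x $ i =
    (if i = 1 then Dx 2 BxV3 (t, x) - Dx 3 BxV2 (t, x)
     else if i = 2 then Dx 3 BxV1 (t, x) - Dx 1 BxV3 (t, x)
     else Dx 1 BxV2 (t, x) - Dx 2 BxV1 (t, x))"
proof -
  have "(\<lambda>y. cross3 (B t y) (v t y) $ 1) = (\<lambda>y. BxV1 (t, y))"
    "(\<lambda>y. cross3 (B t y) (v t y) $ 2) = (\<lambda>y. BxV2 (t, y))"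
    "(\<lambda>y. cross3 (B t y) (v t y) $ 3) = (\<lambda>y. BxV3 (t, y))"
    by (simp_all add: fun_eq_iff cross_components BxV1_def BxV2_def BxV3_def)
  then show ?thesis
    by (simp add: curl_def pdx_eq_Dx smooth_fn_BxV)
qed

lemma lag_density_deriv_eq_variation_density:
  assumes "dl_ds e (\<rho> t x) (s t x) * (ds + dvg (\<lambda>y. s t y *\<^sub>R v t y) x) = - \<mu> * frob (u t) (v t) x"
  shows "lag_density_deriv e (u t x) (vdt v t x + lie (u t) (v t) x) (\<rho> t x) (- dvg (\<lambda>y. \<rho> t y *\<^sub>R v t y) x)
      (s t x) ds (B t x) (- curl (\<lambda>y. cross3 (B t y) (v t y)) x) 0 = variation_density (t, x)"
proof -
  let ?p = "(t, x)"
  have ds: "\<rho> t x * e_s_at ?p * ds = \<mu> * (\<Sum>i\<in>UNIV. \<Sum>j\<in>UNIV. Dx j (component u i) ?p * Dx j (component v i) ?p)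
      - \<rho> t x * e_s_at ?p * (\<Sum>j\<in>UNIV. Dx j (\<lambda>q. case_prod s q * component v j q) ?p)"
    using assms smooth_fields smooth_v by (simp add: dl_ds_eq frob_eq dvg_scaleR algebra_simps)
  have "u t x \<bullet> (vdt v t x + lie (u t) (v t) x) = u t x $ 1 * delta_u 1 ?p + u t x $ 2 * delta_u 2 ?p
      + u t x $ 3 * delta_u 3 ?p"
    by (simp only: inner_vec3 delta_u_component)
  moreover have "B t x \<bullet> (- curl (\<lambda>y. cross3 (B t y) (v t y)) x) =
      B t x $ 1 * (- (Dx 2 BxV3 ?p - Dx 3 BxV2 ?p)) + B t x $ 2 * (- (Dx 3 BxV1 ?p - Dx 1 BxV3 ?p))
      + B t x $ 3 * (- (Dx 1 BxV2 ?p - Dx 2 BxV1 ?p))"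
    by (simp add: inner_vec3 curl_B_cross_v_component)
  moreover have "- dvg (\<lambda>y. \<rho> t y *\<^sub>R v t y) x = - (\<Sum>j\<in>UNIV. Dx j (\<lambda>q. case_prod \<rho> q * component v j q) ?p)"
    using smooth_fields smooth_v by (simp add: dvg_scaleR)
  moreover have "(norm (u t x))\<^sup>2 = u t x $ 1 * u t x $ 1 + u t x $ 2 * u t x $ 2 + u t x $ 3 * u t x $ 3"
    by (simp add: power2_norm_eq_inner inner_vec3)
  ultimately show ?thesis
    unfolding lag_density_deriv_def variation_density_def bernoulli_def
    using ds by (simp add: e_at_def e_rho_at_def e_s_at_def field_simps)
qed


lemma e_s_at_nonzero: "t \<in> {0..Tf} \<Longrightarrow> case_prod \<rho> (t, x) * e_s_at (t, x) \<noteq> 0"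
  using dl_ds_nonzero dl_ds_eq by force

lemma delta_s_eq:
  assumes "dl_ds e (\<rho> t x) (s t x) * (ds + dvg (\<lambda>y. s t y *\<^sub>R v t y) x) = - \<mu> * frob (u t) (v t) x"
    and "t \<in> {0..Tf}"
  shows "ds = \<mu> * (\<Sum>i\<in>UNIV. \<Sum>j\<in>UNIV. Dx j (component u i) (t, x) * Dx j (component v i) (t, x))
      / (case_prod \<rho> (t, x) * e_s_at (t, x)) - (\<Sum>j\<in>UNIV. Dx j (\<lambda>q. case_prod s q * component v j q) (t, x))"
  using assms(1) e_s_at_nonzero[OF assms(2), of x] smooth_fields smooth_v
  by (simp add: dl_ds_eq frob_eq dvg_scaleR field_simps)

lemma continuous_on_variations:
  shows "continuous_on (slab Tf) (\<lambda>p. u (fst p) (snd p))"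
    and "continuous_on (slab Tf) (\<lambda>p. B (fst p) (snd p))"
    and "continuous_on (slab Tf) (\<lambda>p. \<rho> (fst p) (snd p))"
    and "continuous_on (slab Tf) (\<lambda>p. s (fst p) (snd p))"
    and "continuous_on (slab Tf) (\<lambda>p. vdt v (fst p) (snd p) + lie (u (fst p)) (v (fst p)) (snd p))"
    and "continuous_on (slab Tf) (\<lambda>p. - curl (\<lambda>y. cross3 (B (fst p) y) (v (fst p) y)) (snd p))"
    and "continuous_on (slab Tf) (\<lambda>p. - dvg (\<lambda>y. \<rho> (fst p) y *\<^sub>R v (fst p) y) (snd p))"
proof -
  have smooth_dB: "smooth_fn (\<lambda>p. - (if i = 1 then Dx 2 BxV3 p - Dx 3 BxV2 p
      else if i = 2 then Dx 3 BxV1 p - Dx 1 BxV3 p else Dx 1 BxV2 p - Dx 2 BxV1 p))" for i :: 3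
    using exhaust_3[of i] by (auto simp: smooth_fn_intros smooth_fn_BxV)
  have "smooth_fn (delta_u i)" for i
    by (simp add: delta_u_def[abs_def] smooth_fn_intros smooth_all)
  then show "continuous_on (slab Tf) (\<lambda>p. vdt v (fst p) (snd p) + lie (u (fst p)) (v (fst p)) (snd p))"
    using delta_u_component
    by (intro continuous_on_vec_componentwise) (simp add: smooth_fn_continuous_on split_beta')
  have "(\<lambda>p. (- curl (\<lambda>y. cross3 (B (fst p) y) (v (fst p) y)) (snd p)) $ i) = (\<lambda>p. - (if i = 1
      then Dx 2 BxV3 p - Dx 3 BxV2 p else if i = 2 then Dx 3 BxV1 p - Dx 1 BxV3 p else Dx 1 BxV2 p - Dx 2 BxV1 p))"
    for i
    using curl_B_cross_v_component by (auto simp: fun_eq_iff)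
  then show "continuous_on (slab Tf) (\<lambda>p. - curl (\<lambda>y. cross3 (B (fst p) y) (v (fst p) y)) (snd p))"
    using smooth_dB by (intro continuous_on_vec_componentwise) (simp add: smooth_fn_continuous_on)
  show "continuous_on (slab Tf) (\<lambda>p. u (fst p) (snd p))" "continuous_on (slab Tf) (\<lambda>p. B (fst p) (snd p))"
    using smooth(3,4)
    by (auto intro!: continuous_on_vec_componentwise smooth_fn_continuous_on simp: component_def[abs_def])
  show "continuous_on (slab Tf) (\<lambda>p. \<rho> (fst p) (snd p))" "continuous_on (slab Tf) (\<lambda>p. s (fst p) (snd p))"
    using smooth(1,2) smooth_fn_continuous_on by (auto simp: split_beta')
  have "smooth_fn (\<lambda>p. - (\<Sum>j\<in>UNIV. Dx j (\<lambda>q. case_prod \<rho> q * component v j q) p))"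
    by (simp add: smooth_fn_intros smooth_all sum_3)
  then show "continuous_on (slab Tf) (\<lambda>p. - dvg (\<lambda>y. \<rho> (fst p) y *\<^sub>R v (fst p) y) (snd p))"
    using smooth_fields smooth_v by (simp add: dvg_scaleR split_beta' smooth_fn_continuous_on)
qed

lemma continuous_on_delta_s:
  assumes "\<forall>t\<in>{0..Tf}. \<forall>x. dl_ds e (\<rho> t x) (s t x) * (\<delta>s t x + dvg (\<lambda>y. s t y *\<^sub>R v t y) x)
    = - \<mu> * frob (u t) (v t) x"
  shows "continuous_on (slab Tf) (\<lambda>p. \<delta>s (fst p) (snd p))"
proof (rule continuous_on_eq)
  show "continuous_on (slab Tf) (\<lambda>p. \<mu> * (\<Sum>i\<in>UNIV. \<Sum>j\<in>UNIV. Dx j (component u i) p * Dx j (component v i) p)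
      / (case_prod \<rho> p * e_s_at p) - (\<Sum>j\<in>UNIV. Dx j (\<lambda>q. case_prod s q * component v j q) p))"
    using e_s_at_nonzero
    by (intro continuous_on_diff continuous_on_divide smooth_fn_continuous_on)
      (auto simp: smooth_fn_intros smooth_all sum_3 slab_def cbox_Pair_iff)
  show "\<mu> * (\<Sum>i\<in>UNIV. \<Sum>j\<in>UNIV. Dx j (component u i) p * Dx j (component v i) p) / (case_prod \<rho> p * e_s_at p)
      - (\<Sum>j\<in>UNIV. Dx j (\<lambda>q. case_prod s q * component v j q) p) = \<delta>s (fst p) (snd p)"
    if p_slab: "p \<in> slab Tf" for p
  proof -
    obtain t x where p: "p = (t, x)" and t: "t \<in> {0..Tf}"
      using p_slab by (cases p) (auto simp: slab_def cbox_Pair_iff)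
    show ?thesis
      using delta_s_eq[OF assms[rule_format, OF t] t] by (simp add: p)
  qed
qed


lemma has_real_derivative_first_variation:
  assumes vanish: "\<forall>x. v 0 x = 0 \<and> v Tf x = 0"
    and constraint: "\<forall>t\<in>{0..Tf}. \<forall>x. dl_ds e (\<rho> t x) (s t x) * (\<delta>s t x + dvg (\<lambda>y. s t y *\<^sub>R v t y) x)
      = - \<mu> * frob (u t) (v t) x"
  shows "((\<lambda>\<epsilon>. action e Tf (\<lambda>t x. u t x + \<epsilon> *\<^sub>R (vdt v t x + lie (u t) (v t) x))
      (\<lambda>t x. \<rho> t x + \<epsilon> * - dvg (\<lambda>y. \<rho> t y *\<^sub>R v t y) x) (\<lambda>t x. s t x + \<epsilon> * \<delta>s t x)
      (\<lambda>t x. B t x + \<epsilon> *\<^sub>R - curl (\<lambda>y. cross3 (B t y) (v t y)) x))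
    has_real_derivative - integral (slab Tf) (\<lambda>p. \<Sum>i\<in>UNIV. residual i p * component v i p)) (at 0)"
proof -
  note cont = continuous_on_variations continuous_on_delta_s[OF constraint]
  have "integral (slab Tf) (\<lambda>p. lag_density_deriv e (u (fst p) (snd p))
      (vdt v (fst p) (snd p) + lie (u (fst p)) (v (fst p)) (snd p)) (\<rho> (fst p) (snd p))
      (- dvg (\<lambda>y. \<rho> (fst p) y *\<^sub>R v (fst p) y) (snd p)) (s (fst p) (snd p)) (\<delta>s (fst p) (snd p))
      (B (fst p) (snd p)) (- curl (\<lambda>y. cross3 (B (fst p) y) (v (fst p) y)) (snd p)) 0)
    = integral (slab Tf) variation_density"
  proof (rule integral_cong)
    fix p assume "p \<in> slab Tf"
    then obtain t x where p: "p = (t, x)" and t: "t \<in> {0..Tf}"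
      by (cases p) (auto simp: slab_def cbox_Pair_iff)
    show "lag_density_deriv e (u (fst p) (snd p))
      (vdt v (fst p) (snd p) + lie (u (fst p)) (v (fst p)) (snd p)) (\<rho> (fst p) (snd p))
      (- dvg (\<lambda>y. \<rho> (fst p) y *\<^sub>R v (fst p) y) (snd p)) (s (fst p) (snd p)) (\<delta>s (fst p) (snd p))
      (B (fst p) (snd p)) (- curl (\<lambda>y. cross3 (B (fst p) y) (v (fst p) y)) (snd p)) 0 = variation_density p"
      using lag_density_deriv_eq_variation_density constraint t by (simp add: p)
  qed
  also have "\<dots> = - integral (slab Tf) (\<lambda>p. \<Sum>i\<in>UNIV. residual i p * component v i p)"
    using vanish Tf continuity_eq_Dt by (intro integral_variation_density) auto
  finally show ?thesis
    using has_real_derivative_action[OF smooth_e cont(1) cont(5) cont(2) cont(6) cont(3) cont(7) cont(4)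
        cont(8)] by simp
qed

end

context mhd_setting
begin

lemma extremal_if_residual_vanishes:
  assumes "\<And>i t x. t \<in> {0..Tf} \<Longrightarrow> residual i (t, x) = 0"
  shows "extremal e \<mu> Tf u \<rho> s B"
  unfolding extremal_def Let_def
proof (intro allI impI)
  fix v :: vfield and \<delta>s :: sfield
  assume v: "smooth_vf v \<and> (\<forall>t. periodic3 (v t)) \<and> (\<forall>x. v 0 x = 0 \<and> v Tf x = 0) \<and>
    (\<forall>t\<in>{0..Tf}. \<forall>x. dl_ds e (\<rho> t x) (s t x) * (\<delta>s t x + dvg (\<lambda>y. s t y *\<^sub>R v t y) x)
      = - \<mu> * frob (u t) (v t) x)"
  then interpret mhd_variation e \<mu> Tf u B \<rho> s v
    by unfold_locales auto
  have "integral (slab Tf) (\<lambda>p. \<Sum>i\<in>UNIV. residual i p * component v i p) = integral (slab Tf) (\<lambda>p. 0)"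
    using assms by (intro integral_cong) (auto simp: slab_def cbox_Pair_iff)
  then show "((\<lambda>\<epsilon>. action e Tf (\<lambda>t x. u t x + \<epsilon> *\<^sub>R (vdt v t x + lie (u t) (v t) x))
      (\<lambda>t x. \<rho> t x + \<epsilon> * - dvg (\<lambda>y. \<rho> t y *\<^sub>R v t y) x) (\<lambda>t x. s t x + \<epsilon> * \<delta>s t x)
      (\<lambda>t x. B t x + \<epsilon> *\<^sub>R - curl (\<lambda>y. cross3 (B t y) (v t y)) x)) has_real_derivative 0) (at 0)"
    using has_real_derivative_first_variation v by simp
qed

lemma residual_vanishes_if_extremal:
  assumes "extremal e \<mu> Tf u \<rho> s B" and "t \<in> {0..Tf}"
  shows "residual i (t, x) = 0"
proof (rule fundamental_lemma_slab[OF smooth_fn_residual x_periodic_residual Tf _ assms(2)])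
  fix \<phi> :: "spacetime \<Rightarrow> real"
  assume \<phi>: "smooth_fn \<phi>" "x_periodic \<phi>" "\<And>x. \<phi> (0, x) = 0" "\<And>x. \<phi> (Tf, x) = 0"
  define v :: vfield where "v t x = \<phi> (t, x) *\<^sub>R axis i 1" for t x
  have v: "smooth_vf v" "\<forall>t. periodic3 (v t)" "\<forall>x. v 0 x = 0 \<and> v Tf x = 0"
    using \<phi> by (simp_all add: smooth_vf_def v_def smooth_fn_mult[OF \<phi>(1) smooth_fn_const] periodic3_def
        x_periodicD)
  interpret mhd_variation e \<mu> Tf u B \<rho> s v
    using v by unfold_locales
  define \<delta>s :: sfield where
    "\<delta>s t x = - \<mu> * frob (u t) (v t) x / dl_ds e (\<rho> t x) (s t x) - dvg (\<lambda>y. s t y *\<^sub>R v t y) x" for t x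
  have constraint: "\<forall>t\<in>{0..Tf}. \<forall>x. dl_ds e (\<rho> t x) (s t x) * (\<delta>s t x + dvg (\<lambda>y. s t y *\<^sub>R v t y) x)
      = - \<mu> * frob (u t) (v t) x"
    using dl_ds_nonzero by (simp add: \<delta>s_def)
  have "integral (slab Tf) (\<lambda>p. \<Sum>k\<in>UNIV. residual k p * component v k p) = 0"
    using has_real_derivative_first_variation[OF v(3) constraint]
      assms(1)[unfolded extremal_def Let_def, rule_format, of v \<delta>s] v constraint
    by (auto dest: DERIV_unique)
  moreover have "(\<Sum>k\<in>UNIV. residual k p * component v k p) = residual i p * \<phi> p" for p
    by (simp add: v_def component_def axis_def if_distrib sum.delta cong: if_cong)
  ultimately show "integral (slab Tf) (\<lambda>p. residual i p * \<phi> p) = 0"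
    by simp
qed

end

theorem theorem1:
  fixes e :: "real \<Rightarrow> real \<Rightarrow> real" and \<mu> Tf :: real
    and u B :: vfield and \<rho> s :: sfield
  assumes "\<mu> \<ge> 0" and "Tf > 0"
    and "smooth_fn (\<lambda>p::real \<times> real. e (fst p) (snd p))"
    and "smooth_vf u" and "smooth_sf \<rho>" and "smooth_sf s" and "smooth_vf B"
    and "\<forall>t. periodic3 (u t) \<and> periodic3 (\<rho> t) \<and> periodic3 (s t) \<and> periodic3 (B t)"
    and "\<forall>t\<in>{0..Tf}. \<forall>x. dl_ds e (\<rho> t x) (s t x) \<noteq> 0"
    and "\<forall>t\<in>{0..Tf}. \<forall>x. sdt \<rho> t x + dvg (\<lambda>y. \<rho> t y *\<^sub>R u t y) x = 0"
  shows "extremal e \<mu> Tf u \<rho> s B \<longleftrightarrow>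
    (\<forall>t\<in>{0..Tf}. \<forall>x.
       \<rho> t x *\<^sub>R vdt u t x + \<rho> t x *\<^sub>R adv (u t) (u t) x + grad (pressure e \<rho> s t) x
         + cross3 (B t x) (curl (B t) x)
       = visc \<mu> (u t) x)"
proof -
  have "smooth_fn (case_prod e)"
    using assms(3) by (simp add: case_prod_beta')
  then interpret mhd_setting e \<mu> Tf u B \<rho> s
    using assms(2,4-10) by unfold_locales auto
  show ?thesis
    using extremal_if_residual_vanishes residual_vanishes_if_extremal
    by (auto simp: momentum_eq_iff_residual)
qed

end
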